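(* Setting $f_k:=R(u_k)(-u_k)^nf$ (so that $(dd^cu_{k+1})^n=f_k\,dV$), one has for every $k\in\mathbb N$ $$\|f_k\|_{L^{1+1/n}(\Omega)}\le\|f\|_{L^\infty(\Omega)}^{1/(n+1)}\,R(u_0)\,\|u_0\|^n_{L^{n+1}(\Omega,\mu)},$$ where $L^{1+1/n}(\Omega)$ is taken with respect to $dV$.
   Context: $\Omega\Subset\mathbb C^n$ bounded strictly pseudoconvex, $0<f\in C^\infty(\bar\Omega)$, $dV$ Euclidean volume form, $\mu=f\,dV$, $dd^c=i\partial\bar\partial$, $(dd^c u)^n$ the complex Monge–Ampère measure. For bounded negative plurisubharmonic $\phi\not\equiv0$ with $\int_\Omega(dd^c\phi)^n<\infty$: $R(\phi)=\int_\Omega(-\phi)(dd^c\phi)^n\big/\int_\Omega(-\phi)^{n+1}d\mu$. The sequence $(u_k)$: $u_0\in PSH(\Omega)\cap C^{0,1}(\bar\Omega)$ with $(dd^cu_0)^n\ge f\,dV$, $u_0\le0$ on $\partial\Omega$, $\int_\Omega(dd^cu_0)^n<\infty$; $u_{k+1}\in PSH(\Omega)\cap C^0(\bar\Omega)$ is the unique solution of $(dd^cu_{k+1})^n=R(u_k)(-u_k)^nf\,dV$ on $\Omega$, $u_{k+1}=0$ on $\partial\Omega$. *)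

theory Defs
  imports "HOL-Analysis.Analysis"
begin

type_synonym 'n cvec = "complex ^ 'n"

definition dirderiv :: "('n::finite cvec \<Rightarrow> real) \<Rightarrow> 'n cvec \<Rightarrow> 'n cvec \<Rightarrow> real" where
  "dirderiv g v z = deriv (\<lambda>t::real. g (z + t *\<^sub>R v)) 0"

text \<open>The 2n real coordinate directions: x_j = axis j 1, y_j = axis j i.\<close>
definition coord_dirs :: "'n::finite cvec set" where
  "coord_dirs = {axis j 1 | j. True} \<union> {axis j \<i> | j. True}"

fun iter_deriv :: "'n::finite cvec list \<Rightarrow> ('n cvec \<Rightarrow> real) \<Rightarrow> ('n cvec \<Rightarrow> real)" where
  "iter_deriv [] g = g"
| "iter_deriv (v # vs) g = dirderiv (iter_deriv vs g) v"

definition Ck_on :: "nat \<Rightarrow> 'n::finite cvec set \<Rightarrow> ('n cvec \<Rightarrow> real) \<Rightarrow> bool" where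
  "Ck_on k U g \<longleftrightarrow> open U \<and>
     (\<forall>vs. set vs \<subseteq> coord_dirs \<and> length vs \<le> k \<longrightarrow>
        continuous_on U (iter_deriv vs g) \<and>
        (\<forall>v\<in>coord_dirs. length vs < k \<longrightarrow>
           (\<forall>z\<in>U. (\<lambda>t::real. iter_deriv vs g (z + t *\<^sub>R v)) differentiable (at 0))))"

definition smooth_on :: "'n::finite cvec set \<Rightarrow> ('n cvec \<Rightarrow> real) \<Rightarrow> bool" where
  "smooth_on U g \<longleftrightarrow> (\<forall>k. Ck_on k U g)"

definition smooth_on_closure :: "'n::finite cvec set \<Rightarrow> ('n cvec \<Rightarrow> real) \<Rightarrow> bool" where
  "smooth_on_closure \<Omega> g \<longleftrightarrow>
     (\<exists>U h. open U \<and> closure \<Omega> \<subseteq> U \<and> smooth_on U h \<and> (\<forall>z\<in>closure \<Omega>. h z = g z))"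

definition complex_hessian :: "('n::finite cvec \<Rightarrow> real) \<Rightarrow> 'n cvec \<Rightarrow> complex ^ 'n ^ 'n" where
  "complex_hessian g z = (\<chi> j k.
     (complex_of_real (dirderiv (dirderiv g (axis k 1)) (axis j 1) z
                     + dirderiv (dirderiv g (axis k \<i>)) (axis j \<i>) z)
      + \<i> * complex_of_real (dirderiv (dirderiv g (axis k \<i>)) (axis j 1) z
                     - dirderiv (dirderiv g (axis k 1)) (axis j \<i>) z)) / 4)"

text \<open>For C^2 g, (dd^c g)^n = (i \<partial>\<bar>\<partial> g)^n = n! 2^n det(g_{j\bar k}) dV, since i dz\<and>d\<bar>z = 2 dx\<and>dy.\<close>
definition MA_density :: "('n::finite cvec \<Rightarrow> real) \<Rightarrow> 'n cvec \<Rightarrow> real" where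
  "MA_density g z = fact CARD('n) * 2 ^ CARD('n) * Re (det (complex_hessian g z))"

definition usc_on :: "'n::finite cvec set \<Rightarrow> ('n cvec \<Rightarrow> real) \<Rightarrow> bool" where
  "usc_on \<Omega> g \<longleftrightarrow> (\<forall>x\<in>\<Omega>. \<forall>c. g x < c \<longrightarrow> (\<forall>\<^sub>F y in at x within \<Omega>. g y < c))"

text \<open>Real-valued plurisubharmonic functions: upper semicontinuous and subharmonic on every
  complex line, expressed by the sub-mean value inequality on every closed disc in \<Omega>.\<close>
definition psh_on :: "'n::finite cvec set \<Rightarrow> ('n cvec \<Rightarrow> real) \<Rightarrow> bool" where
  "psh_on \<Omega> g \<longleftrightarrow> open \<Omega> \<and> usc_on \<Omega> g \<and>
     (\<forall>a b. (\<forall>\<zeta>. cmod \<zeta> \<le> 1 \<longrightarrow> a + \<zeta> *s b \<in> \<Omega>) \<longrightarrow>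
        set_integrable lborel {0..2*pi} (\<lambda>\<theta>. g (a + cis \<theta> *s b)) \<and>
        g a \<le> (1 / (2*pi)) * (LINT \<theta>:{0..2*pi}|lborel. g (a + cis \<theta> *s b)))"

definition strictly_psh_C2_on :: "'n::finite cvec set \<Rightarrow> ('n cvec \<Rightarrow> real) \<Rightarrow> bool" where
  "strictly_psh_C2_on U g \<longleftrightarrow> Ck_on 2 U g \<and>
     (\<forall>z\<in>U. \<forall>w::'n cvec. w \<noteq> 0 \<longrightarrow>
        0 < Re (\<Sum>j\<in>UNIV. \<Sum>k\<in>UNIV. complex_hessian g z $ j $ k * w $ j * cnj (w $ k)))"

definition strictly_pseudoconvex :: "'n::finite cvec set \<Rightarrow> bool" where
  "strictly_pseudoconvex \<Omega> \<longleftrightarrow> bounded \<Omega> \<and> open \<Omega> \<and> \<Omega> \<noteq> {} \<and>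
     (\<exists>U \<rho>. open U \<and> closure \<Omega> \<subseteq> U \<and> smooth_on U \<rho> \<and> strictly_psh_C2_on U \<rho> \<and>
        \<Omega> = {z\<in>U. \<rho> z < 0} \<and>
        (\<forall>z\<in>frontier \<Omega>. \<exists>v\<in>coord_dirs. dirderiv \<rho> v z \<noteq> 0))"

definition is_MA :: "'n::finite cvec set \<Rightarrow> ('n cvec \<Rightarrow> real) \<Rightarrow> 'n cvec measure \<Rightarrow> bool" where
  "is_MA \<Omega> u \<nu> \<longleftrightarrow> sets \<nu> = sets borel \<and> emeasure \<nu> (UNIV - \<Omega>) = 0 \<and>
     (\<forall>K. compact K \<and> K \<subseteq> \<Omega> \<longrightarrow> emeasure \<nu> K < \<infinity>) \<and>
     (\<forall>V w. open V \<and> compact (closure V) \<and> closure V \<subseteq> \<Omega> \<and>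
        (\<forall>j. Ck_on 2 V (w j) \<and> psh_on V (w j)) \<and>
        uniform_limit V w u sequentially \<longrightarrow>
        (\<forall>h. continuous_on UNIV h \<and> compact (closure {z. h z \<noteq> 0}) \<and>
            closure {z. h z \<noteq> 0} \<subseteq> V \<longrightarrow>
            (\<lambda>j. integral\<^sup>L lborel (\<lambda>z. h z * MA_density (w j) z))
              \<longlonglongrightarrow> integral\<^sup>L \<nu> h))"

definition MA :: "'n::finite cvec set \<Rightarrow> ('n cvec \<Rightarrow> real) \<Rightarrow> 'n cvec measure" where
  "MA \<Omega> u = (THE \<nu>. is_MA \<Omega> u \<nu>)"

definition Rq :: "'n::finite cvec set \<Rightarrow> ('n cvec \<Rightarrow> real) \<Rightarrow> ('n cvec \<Rightarrow> real) \<Rightarrow> real" where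
  "Rq \<Omega> f \<phi> = (LINT z:\<Omega>|MA \<Omega> \<phi>. - \<phi> z)
               / (LINT z:\<Omega>|lborel. (- \<phi> z) ^ (CARD('n) + 1) * f z)"

end

theory Submission
  imports Defs
begin

text \<open>Write \<open>f_k = R(u_k) (-u_k)^n f\<close> and \<open>a_k = R(u_k) \<parallel>u_k\<parallel>^n\<close>, norms taken in \<open>L^(n+1)(\<mu>)\<close>.
  By the maximum principle every \<open>u_k\<close> is nonpositive, and pointwise
  \<open>f_k^(1+1/n) \<le> R(u_k)^(1+1/n) (sup f)^(1/n) |u_k|^(n+1) f\<close>, so that
  \<open>\<parallel>f_k\<parallel>_(1+1/n) \<le> (sup f)^(1/(n+1)) a_k\<close>. It remains to see that \<open>a_k\<close> does not increase.
  Since the Monge--Ampere measure of \<open>u_(k+1)\<close> is \<open>f_k dV\<close>, the numerator of \<open>R(u_(k+1))\<close> is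
  \<open>R(u_k) \<integral> (-u_(k+1)) (-u_k)^n d\<mu>\<close>, and Hoelder's inequality with exponents \<open>n+1\<close> and
  \<open>(n+1)/n\<close> bounds it by \<open>R(u_k) \<parallel>u_(k+1)\<parallel> \<parallel>u_k\<parallel>^n\<close>; dividing by \<open>\<parallel>u_(k+1)\<parallel>^(n+1)\<close> gives
  \<open>a_(k+1) \<le> a_k\<close>.

  Identifying the Monge--Ampere measure of \<open>u_(k+1)\<close> requires its uniqueness, which follows from
  the definition: on relatively compact subdomains a continuous psh function is the uniform limit of
  its mollifications, which are \<open>C\<^sup>2\<close> and psh. Hence two Monge--Ampere measures integrate compactly
  supported continuous functions alike, so they agree on compact sets and, being locally finite and
  concentrated on \<open>\<Omega>\<close>, everywhere.\<close>

section \<open>Mollification\<close>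

definition pos_pow :: "nat \<Rightarrow> real \<Rightarrow> real" where
  "pos_pow k s = (max 0 s) ^ k"

lemma pos_pow_has_real_derivative:
  assumes "k \<ge> 1"
  shows "(pos_pow (Suc k) has_real_derivative (real (Suc k) * pos_pow k s)) (at s)"
proof -
  consider "s > 0" | "s < 0" | "s = 0" by linarith
  then show ?thesis
  proof cases
    case 1
    have "((\<lambda>x. x ^ Suc k) has_real_derivative (real (Suc k) * s ^ k)) (at s)"
      by (rule derivative_eq_intros refl | simp)+
    then have "((\<lambda>x. x ^ Suc k) has_real_derivative (real (Suc k) * pos_pow k s)) (at s)"
      using 1 by (simp add: pos_pow_def)
    then show ?thesis
      by (rule has_field_derivative_transform_within_open[where S="{0<..}"])
        (use 1 in \<open>auto simp: pos_pow_def\<close>)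
  next
    case 2
    have "((\<lambda>x. 0) has_real_derivative (real (Suc k) * pos_pow k s)) (at s)"
      using 2 assms by (simp add: pos_pow_def max_def power_0_left)
    then show ?thesis
      by (rule has_field_derivative_transform_within_open[where S="{..<0}"])
        (use 2 in \<open>auto simp: pos_pow_def\<close>)
  next
    case 3
    have "(\<lambda>h. (pos_pow (Suc k) (0 + h) - pos_pow (Suc k) 0) / h) \<midarrow>0\<rightarrow> 0"
    proof (rule Lim_null_comparison)
      show "\<forall>\<^sub>F h in at 0. norm ((pos_pow (Suc k) (0 + h) - pos_pow (Suc k) 0) / h) \<le> \<bar>h\<bar> ^ k"
        by (intro always_eventually allI) (simp add: pos_pow_def max_def)
      show "((\<lambda>h. \<bar>h\<bar> ^ k) \<longlongrightarrow> 0) (at (0::real))"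
        using assms by (auto intro!: tendsto_eq_intros simp: power_0_left)
    qed
    then show ?thesis using 3 assms by (simp add: DERIV_def pos_pow_def power_0_left)
  qed
qed

lemma continuous_on_pos_pow: "continuous_on UNIV (pos_pow k)"
  unfolding pos_pow_def by (intro continuous_intros)

text \<open>Cubing the positive part makes the bump \<open>C\<^sup>2\<close>, all the regularity \<open>Ck_on 2\<close> asks for.\<close>

definition bump :: "real \<Rightarrow> 'a::real_inner \<Rightarrow> real" where
  "bump e y = pos_pow 3 (e\<^sup>2 - (norm y)\<^sup>2)"

definition bump_deriv :: "real \<Rightarrow> 'a::real_inner \<Rightarrow> 'a \<Rightarrow> real" where
  "bump_deriv e v y = 3 * pos_pow 2 (e\<^sup>2 - (norm y)\<^sup>2) * (-2 * (y \<bullet> v))"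

definition bump_deriv2 :: "real \<Rightarrow> 'a::real_inner \<Rightarrow> 'a \<Rightarrow> 'a \<Rightarrow> real" where
  "bump_deriv2 e v1 v2 y =
     3 * (2 * pos_pow 1 (e\<^sup>2 - (norm y)\<^sup>2) * (-2 * (y \<bullet> v1)) * (-2 * (y \<bullet> v2))
          + pos_pow 2 (e\<^sup>2 - (norm y)\<^sup>2) * (-2 * (v1 \<bullet> v2)))"

lemma bump_radius_line_has_derivative:
  fixes y v :: "'a::real_inner"
  shows "((\<lambda>s. e\<^sup>2 - (norm (y + s *\<^sub>R v))\<^sup>2) has_real_derivative (-2 * (y \<bullet> v))) (at 0)"
proof -
  have "(norm (y + s *\<^sub>R v))\<^sup>2 = (norm y)\<^sup>2 + 2 * s * (y \<bullet> v) + s\<^sup>2 * (norm v)\<^sup>2" for s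
    by (simp only: power2_norm_eq_inner)
      (simp add: inner_add_left inner_add_right inner_commute algebra_simps power2_eq_square)
  moreover have "((\<lambda>s. e\<^sup>2 - ((norm y)\<^sup>2 + 2 * s * (y \<bullet> v) + s\<^sup>2 * (norm v)\<^sup>2))
      has_real_derivative (-2 * (y \<bullet> v))) (at 0)"
    by (auto intro!: derivative_eq_intros)
  ultimately show ?thesis by simp
qed

lemma bump_line_has_derivative:
  "((\<lambda>s. bump e (y + s *\<^sub>R v)) has_real_derivative bump_deriv e v y) (at 0)"
  using DERIV_chain2[OF pos_pow_has_real_derivative[of 2] bump_radius_line_has_derivative]
  by (simp add: bump_def bump_deriv_def numeral_3_eq_3)

lemma bump_deriv_line_has_derivative:
  "((\<lambda>s. bump_deriv e v2 (y + s *\<^sub>R v1)) has_real_derivative bump_deriv2 e v1 v2 y) (at 0)"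
proof -
  have d1: "((\<lambda>s. pos_pow 2 (e\<^sup>2 - (norm (y + s *\<^sub>R v1))\<^sup>2)) has_real_derivative
      (real (Suc 1) * pos_pow 1 (e\<^sup>2 - (norm y)\<^sup>2)) * (-2 * (y \<bullet> v1))) (at 0)"
    using DERIV_chain2[OF pos_pow_has_real_derivative[of 1] bump_radius_line_has_derivative]
    by (simp add: numeral_2_eq_2)
  have d2: "((\<lambda>s. -2 * ((y + s *\<^sub>R v1) \<bullet> v2)) has_real_derivative (-2 * (v1 \<bullet> v2))) (at 0)"
    unfolding inner_add_left by (auto intro!: derivative_eq_intros)
  show ?thesis
    using DERIV_cmult[OF DERIV_mult[OF d1 d2], of 3]
    by (simp add: bump_deriv_def bump_deriv2_def algebra_simps)
qed

lemma continuous_on_bump: "continuous_on UNIV (bump e)"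
  and continuous_on_bump_deriv: "continuous_on UNIV (bump_deriv e v)"
  and continuous_on_bump_deriv2: "continuous_on UNIV (bump_deriv2 e v1 v2)"
  unfolding bump_def bump_deriv_def bump_deriv2_def
  by (intro continuous_intros continuous_on_compose2[OF continuous_on_pos_pow]; simp)+

lemma bump_nonneg: "bump e y \<ge> 0"
  by (simp add: bump_def pos_pow_def)

lemma bump_eq_0: "0 \<le> e \<Longrightarrow> e \<le> norm y \<Longrightarrow> bump e y = 0"
  by (simp add: bump_def pos_pow_def max_def power_mono)

definition unit_cube :: "'a::euclidean_space set" where
  "unit_cube = cbox (- One) One"

lemma mem_unit_cube_if_norm_le_1: "norm (y::'a::euclidean_space) \<le> 1 \<Longrightarrow> y \<in> unit_cube"
proof -
  have inner_One: "i \<bullet> (\<Sum>Basis::'a) = 1" if "i \<in> Basis" for i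
    using inner_sum_Basis[OF that] by (simp add: inner_commute)
  assume "norm y \<le> 1"
  then show ?thesis
    unfolding unit_cube_def mem_box
    using Basis_le_norm[of _ y] inner_One by (force simp: abs_le_iff inner_commute)
qed

lemma integral_bump_pos:
  assumes "0 < e"
  shows "0 < integral (unit_cube::'a::euclidean_space set) (bump e)"
proof -
  have c: "continuous_on (cbox (- One) (One::'a)) (bump e)"
    using continuous_on_bump continuous_on_subset by blast
  have "0 \<le> integral (cbox (- One) (One::'a)) (bump e)"
    by (rule integral_nonneg) (use c integrable_continuous bump_nonneg in auto)
  moreover have "integral (cbox (- One) (One::'a)) (bump e) \<noteq> 0"
  proof -
    have "(0::'a) \<in> cbox (- One) One" "bump e (0::'a) \<noteq> 0"
      using mem_unit_cube_if_norm_le_1[of 0] assms by (auto simp: unit_cube_def bump_def pos_pow_def)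
    moreover have "box (- One) (One::'a) \<noteq> {}"
      by (simp add: box_ne_empty)
    ultimately show ?thesis
      using integral_cbox_eq_0_iff[OF c] bump_nonneg by blast
  qed
  ultimately show ?thesis by (simp add: unit_cube_def)
qed

definition mollifier :: "real \<Rightarrow> 'a::euclidean_space \<Rightarrow> real" where
  "mollifier e y = bump e y / integral (unit_cube :: 'a set) (bump e)"

lemma mollifier_nonneg: "0 < e \<Longrightarrow> 0 \<le> mollifier e (y::'a::euclidean_space)"
  using integral_bump_pos[of e, where 'a='a] bump_nonneg[of e y] by (simp add: mollifier_def)

lemma continuous_on_mollifier: "continuous_on S (mollifier e)"
  unfolding mollifier_def divide_inverse
  by (intro continuous_intros continuous_on_subset[OF continuous_on_bump] subset_UNIV)

lemma mollifier_eq_0: "0 < e \<Longrightarrow> e \<le> norm y \<Longrightarrow> mollifier e y = 0"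
  by (simp add: mollifier_def bump_eq_0)

lemma integral_mollifier: "0 < e \<Longrightarrow> integral unit_cube (mollifier e :: 'a::euclidean_space \<Rightarrow> real) = 1"
  using integral_bump_pos[of e, where 'a='a] unfolding mollifier_def by simp

definition convolution_on :: "'a::euclidean_space set \<Rightarrow> ('a \<Rightarrow> real) \<Rightarrow> ('a \<Rightarrow> real) \<Rightarrow> 'a \<Rightarrow> real" where
  "convolution_on C U \<psi> z = integral C (\<lambda>x. U x * \<psi> (z - x))"

lemma continuous_on_convolution_on:
  assumes "continuous_on UNIV U" "continuous_on UNIV \<psi>"
  shows "continuous_on UNIV (convolution_on (cbox a b) U \<psi>)"
  unfolding convolution_on_def
  by (rule integral_continuous_on_param)
    (auto simp: split_beta intro!: continuous_intros continuous_on_compose2[OF assms(2)]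
      continuous_on_compose2[OF assms(1)])

lemma convolution_on_line_has_derivative:
  assumes U: "continuous_on UNIV U" and \<psi>: "continuous_on UNIV \<psi>" and \<psi>': "continuous_on UNIV \<psi>'"
    and deriv: "\<And>y. ((\<lambda>s. \<psi> (y + s *\<^sub>R v)) has_real_derivative \<psi>' y) (at 0)"
  shows "((\<lambda>t. convolution_on (cbox a b) U \<psi> (z + t *\<^sub>R v)) has_real_derivative
           convolution_on (cbox a b) U \<psi>' (z + t0 *\<^sub>R v)) (at t0)"
proof -
  have fx: "((\<lambda>t. U x * \<psi> (z + t *\<^sub>R v - x)) has_real_derivative U x * \<psi>' (z + t *\<^sub>R v - x)) (at t)"
    for t x
  proof -
    let ?y = "z + t *\<^sub>R v - x"
    have "((\<lambda>s. \<psi> (?y + s *\<^sub>R v)) has_real_derivative \<psi>' ?y) (at (t + - t))"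
      using deriv by simp
    then have "((\<lambda>s. \<psi> (?y + (s + - t) *\<^sub>R v)) has_real_derivative \<psi>' ?y) (at t)"
      by (simp only: DERIV_shift)
    moreover have "(\<lambda>s. \<psi> (?y + (s + - t) *\<^sub>R v)) = (\<lambda>s. \<psi> (z + s *\<^sub>R v - x))"
      by (intro ext arg_cong[where f=\<psi>]) (simp add: algebra_simps)
    ultimately show ?thesis by (intro DERIV_cmult) simp
  qed
  have "((\<lambda>t. integral (cbox a b) (\<lambda>x. U x * \<psi> (z + t *\<^sub>R v - x))) has_field_derivative
      integral (cbox a b) (\<lambda>x. U x * \<psi>' (z + t0 *\<^sub>R v - x))) (at t0 within UNIV)"
  proof (rule leibniz_rule_field_derivative[where fx="\<lambda>t x. U x * \<psi>' (z + t *\<^sub>R v - x)"])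
    show "\<And>t x. ((\<lambda>t. U x * \<psi> (z + t *\<^sub>R v - x)) has_field_derivative U x * \<psi>' (z + t *\<^sub>R v - x))
        (at t within UNIV)"
      using fx by blast
    show "\<And>t. (\<lambda>x. U x * \<psi> (z + t *\<^sub>R v - x)) integrable_on cbox a b"
      by (intro integrable_continuous continuous_intros continuous_on_compose2[OF \<psi>]
          continuous_on_compose2[OF U]) auto
    show "continuous_on (UNIV \<times> cbox a b) (\<lambda>(t, x). U x * \<psi>' (z + t *\<^sub>R v - x))"
      by (auto simp: split_beta intro!: continuous_intros continuous_on_compose2[OF \<psi>']
          continuous_on_compose2[OF U])
  qed auto
  then show ?thesis by (simp add: convolution_on_def)
qed

lemma
  assumes "continuous_on UNIV U" "continuous_on UNIV \<psi>" "continuous_on UNIV \<psi>'"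
    and "\<And>y. ((\<lambda>s. \<psi> (y + s *\<^sub>R v)) has_real_derivative \<psi>' y) (at 0)"
  shows dirderiv_convolution_on:
      "dirderiv (convolution_on (cbox a b) U \<psi>) v = convolution_on (cbox a b) U \<psi>'"
    and convolution_on_line_differentiable:
      "(\<lambda>t. convolution_on (cbox a b) U \<psi> (z + t *\<^sub>R v)) differentiable (at 0)"
proof -
  show "dirderiv (convolution_on (cbox a b) U \<psi>) v = convolution_on (cbox a b) U \<psi>'"
    by (rule ext) (simp add: dirderiv_def
        DERIV_imp_deriv[OF convolution_on_line_has_derivative[OF assms, of a b _ 0, simplified]])
  show "(\<lambda>t. convolution_on (cbox a b) U \<psi> (z + t *\<^sub>R v)) differentiable (at 0)"
    using convolution_on_line_has_derivative[OF assms, of a b z 0]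
    by (meson differentiableI has_field_derivative_imp_has_derivative)
qed

lemma Ck_on_2_convolution_on:
  fixes U :: "'n::finite cvec \<Rightarrow> real"
  assumes U: "continuous_on UNIV U" and c0: "continuous_on UNIV \<phi>"
    and c1: "\<And>v. continuous_on UNIV (\<phi>1 v)" and c2: "\<And>v1 v2. continuous_on UNIV (\<phi>2 v1 v2)"
    and d1: "\<And>v y. ((\<lambda>s. \<phi> (y + s *\<^sub>R v)) has_real_derivative \<phi>1 v y) (at 0)"
    and d2: "\<And>v1 v2 y. ((\<lambda>s. \<phi>1 v2 (y + s *\<^sub>R v1)) has_real_derivative \<phi>2 v1 v2 y) (at 0)"
    and V: "open V"
  shows "Ck_on 2 V (convolution_on (cbox a b) U \<phi>)"
proof -
  let ?g = "convolution_on (cbox a b) U \<phi>"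
  have derivs: "\<exists>\<psi>. continuous_on UNIV \<psi> \<and> iter_deriv vs ?g = convolution_on (cbox a b) U \<psi> \<and>
      (length vs < 2 \<longrightarrow> (\<forall>v. \<exists>\<psi>'. continuous_on UNIV \<psi>' \<and>
         (\<forall>y. ((\<lambda>s. \<psi> (y + s *\<^sub>R v)) has_real_derivative \<psi>' y) (at 0))))"
    if len: "length vs \<le> 2" for vs
  proof -
    consider "vs = []" | v2 where "vs = [v2]" | v1 v2 where "vs = [v1, v2]"
      using len by (cases vs; cases "tl vs"; auto)
    then show ?thesis
    proof cases
      case 1
      then show ?thesis using c0 c1 d1 by simp blast
    next
      case 2
      then show ?thesis using c1 c2 d2 dirderiv_convolution_on[OF U c0 c1 d1] by simp blast
    next
      case 3
      then show ?thesis
        using c2 dirderiv_convolution_on[OF U c0 c1 d1] dirderiv_convolution_on[OF U c1 c2 d2]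
        by auto
    qed
  qed
  show ?thesis
    unfolding Ck_on_def
  proof (intro conjI allI impI ballI V)
    fix vs :: "'n cvec list" assume "set vs \<subseteq> coord_dirs \<and> length vs \<le> 2"
    then obtain \<psi> where \<psi>: "continuous_on UNIV \<psi>" "iter_deriv vs ?g = convolution_on (cbox a b) U \<psi>"
      "length vs < 2 \<longrightarrow> (\<forall>v. \<exists>\<psi>'. continuous_on UNIV \<psi>' \<and>
         (\<forall>y. ((\<lambda>s. \<psi> (y + s *\<^sub>R v)) has_real_derivative \<psi>' y) (at 0)))"
      using derivs by blast
    show "continuous_on V (iter_deriv vs ?g)"
      using continuous_on_convolution_on[OF U \<psi>(1), of a b] \<psi>(2) continuous_on_subset by fastforce
    fix v z assume "length vs < 2"
    then obtain \<psi>' where "continuous_on UNIV \<psi>'"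
      "\<And>y. ((\<lambda>s. \<psi> (y + s *\<^sub>R v)) has_real_derivative \<psi>' y) (at 0)"
      using \<psi>(3) by blast
    from convolution_on_line_differentiable[OF U \<psi>(1) this]
    show "(\<lambda>t. iter_deriv vs ?g (z + t *\<^sub>R v)) differentiable at 0" using \<psi>(2) by simp
  qed
qed

lemma Ck_on_2_convolution_mollifier:
  fixes U :: "'n::finite cvec \<Rightarrow> real"
  assumes "continuous_on UNIV U" "open V"
  shows "Ck_on 2 V (convolution_on (cbox a b) U (mollifier e))"
proof (rule Ck_on_2_convolution_on[OF assms(1) continuous_on_mollifier _ _ _ _ assms(2)])
  let ?N = "integral (unit_cube :: 'n cvec set) (bump e)"
  show "continuous_on UNIV (\<lambda>y. bump_deriv e v y / ?N)" for v
    unfolding divide_inverse by (intro continuous_intros continuous_on_bump_deriv)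
  show "continuous_on UNIV (\<lambda>y. bump_deriv2 e v1 v2 y / ?N)" for v1 v2
    unfolding divide_inverse by (intro continuous_intros continuous_on_bump_deriv2)
  show "((\<lambda>s. mollifier e (y + s *\<^sub>R v)) has_real_derivative bump_deriv e v y / ?N) (at 0)"
    for v y :: "'n cvec"
    using DERIV_cdivide[OF bump_line_has_derivative] by (simp add: mollifier_def)
  show "((\<lambda>s. bump_deriv e v2 (y + s *\<^sub>R v1) / ?N) has_real_derivative bump_deriv2 e v1 v2 y / ?N)
      (at 0)" for v1 v2 y :: "'n cvec"
    by (intro DERIV_cdivide bump_deriv_line_has_derivative)
qed

lemma convolution_on_eq_integral_translates:
  fixes U \<psi> :: "'a::euclidean_space \<Rightarrow> real"
  assumes U: "continuous_on UNIV U" and \<psi>: "continuous_on UNIV \<psi>"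
    and supp: "\<And>y. y \<notin> cbox c d \<Longrightarrow> \<psi> y = 0"
    and sub: "\<And>y. y \<in> cbox c d \<Longrightarrow> z - y \<in> cbox a b"
  shows "convolution_on (cbox a b) U \<psi> z = integral (cbox c d) (\<lambda>y. U (z - y) * \<psi> y)"
proof -
  let ?g1 = "\<lambda>x. U x * \<psi> (z - x)"
  let ?g2 = "\<lambda>y. U (z - y) * \<psi> y"
  have cg1: "continuous_on UNIV ?g1" and cg2: "continuous_on UNIV ?g2"
    by (intro continuous_intros continuous_on_compose2[OF \<psi>] continuous_on_compose2[OF U]; simp)+
  have "(?g1 has_integral convolution_on (cbox a b) U \<psi> z) (cbox a b)"
    unfolding convolution_on_def using cg1 continuous_on_subset integrable_continuous by blast
  from has_integral_affinity[OF this, of "-1" z]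
  have I1: "(?g2 has_integral convolution_on (cbox a b) U \<psi> z) ((\<lambda>x. -x + z) ` cbox a b)"
    by simp
  have "cbox c d \<subseteq> (\<lambda>x. -x + z) ` cbox a b"
  proof
    fix y assume "y \<in> cbox c d"
    then have "z - y \<in> cbox a b" by (rule sub)
    moreover have "y = - (z - y) + z" by simp
    ultimately show "y \<in> (\<lambda>x. -x + z) ` cbox a b" by blast
  qed
  moreover have "(?g2 has_integral integral (cbox c d) ?g2) (cbox c d)"
    using cg2 continuous_on_subset integrable_continuous by blast
  ultimately have "(?g2 has_integral integral (cbox c d) ?g2) ((\<lambda>x. -x + z) ` cbox a b)"
    using has_integral_on_superset[of ?g2 _ "cbox c d"] supp by auto
  then show ?thesis using I1 has_integral_unique by blast
qed

lemma convolution_on_mollifier_eq: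
  fixes U :: "'a::euclidean_space \<Rightarrow> real"
  assumes "continuous_on UNIV U" "0 < e" "e \<le> 1" "\<And>y. y \<in> unit_cube \<Longrightarrow> z - y \<in> cbox a b"
  shows "convolution_on (cbox a b) U (mollifier e) z = integral unit_cube (\<lambda>y. U (z - y) * mollifier e y)"
  unfolding unit_cube_def
proof (rule convolution_on_eq_integral_translates[OF assms(1) continuous_on_mollifier])
  fix y :: 'a
  show "mollifier e y = 0" if "y \<notin> cbox (- One) One"
  proof (rule mollifier_eq_0[OF assms(2)])
    have "\<not> norm y \<le> 1" using that mem_unit_cube_if_norm_le_1[of y] by (auto simp: unit_cube_def)
    then show "e \<le> norm y" using assms(3) by linarith
  qed
qed (use assms(4) in \<open>auto simp: unit_cube_def\<close>)

section \<open>Approximation of continuous psh functions by \<open>C\<^sup>2\<close> psh functions\<close>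

lemma continuous_on_circle: "continuous_on UNIV (\<lambda>\<theta>::real. a + cis \<theta> *s (b::'n::finite cvec))"
  unfolding vector_scalar_mult_def by (intro continuous_intros)

lemma usc_on_if_continuous_on: "continuous_on V w \<Longrightarrow> usc_on V w"
  unfolding usc_on_def continuous_on_def by (blast intro: order_tendstoD(2))

lemma
  assumes "psh_on \<Omega> u" "\<forall>\<zeta>. cmod \<zeta> \<le> 1 \<longrightarrow> a + \<zeta> *s b \<in> \<Omega>"
  shows psh_on_circle_integrable: "(\<lambda>\<theta>. u (a + cis \<theta> *s b)) integrable_on {0..2*pi}"
    and psh_on_sub_mean_value: "2 * pi * u a \<le> integral {0..2*pi} (\<lambda>\<theta>. u (a + cis \<theta> *s b))"
proof -
  have "set_integrable lborel {0..2*pi} (\<lambda>\<theta>. u (a + cis \<theta> *s b))"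
    and mean: "u a \<le> (1 / (2*pi)) * (LINT \<theta>:{0..2*pi}|lborel. u (a + cis \<theta> *s b))"
    using assms unfolding psh_on_def by blast+
  note set_borel_integral_eq_integral[OF this(1)]
  then show "(\<lambda>\<theta>. u (a + cis \<theta> *s b)) integrable_on {0..2*pi}"
    and "2 * pi * u a \<le> integral {0..2*pi} (\<lambda>\<theta>. u (a + cis \<theta> *s b))"
    using mean by (simp_all add: field_simps)
qed

lemma psh_on_sub_mean_value_extension:
  assumes psh: "psh_on \<Omega> u" and ut: "\<And>z. z \<in> \<Omega> \<Longrightarrow> ut z = u z"
    and disc: "\<forall>\<zeta>. cmod \<zeta> \<le> 1 \<longrightarrow> a + \<zeta> *s b \<in> \<Omega>"
  shows "2 * pi * ut a \<le> integral {0..2*pi} (\<lambda>\<theta>. ut (a + cis \<theta> *s b))"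
proof -
  have "integral {0..2*pi} (\<lambda>\<theta>. u (a + cis \<theta> *s b)) = integral {0..2*pi} (\<lambda>\<theta>. ut (a + cis \<theta> *s b))"
    by (rule integral_cong) (use disc in \<open>simp add: ut\<close>)
  moreover have "a \<in> \<Omega>" using disc[rule_format, of 0] by simp
  ultimately show ?thesis using psh_on_sub_mean_value[OF psh disc] ut by simp
qed

lemma
  fixes ut \<phi> :: "'n::finite cvec \<Rightarrow> real"
  assumes ut: "continuous_on UNIV ut" and \<phi>: "continuous_on UNIV \<phi>"
  shows integrable_circle_integral_translates:
      "(\<lambda>y. integral {0..2*pi} (\<lambda>\<theta>. ut (a + cis \<theta> *s b - y) * \<phi> y)) integrable_on unit_cube"
    and integral_circle_integral_translates_swap:
      "integral unit_cube (\<lambda>y. integral {0..2*pi} (\<lambda>\<theta>. ut (a + cis \<theta> *s b - y) * \<phi> y))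
         = integral {0..2*pi} (\<lambda>\<theta>. integral unit_cube (\<lambda>y. ut (a + cis \<theta> *s b - y) * \<phi> y))"
proof -
  let ?F = "\<lambda>\<theta> y. ut (a + cis \<theta> *s b - y) * \<phi> y"
  have cF: "continuous_on UNIV (\<lambda>p. ?F (fst p) (snd p))"
    and cF': "continuous_on UNIV (\<lambda>p. ?F (snd p) (fst p))"
    by (intro continuous_intros continuous_on_compose2[OF \<phi>] continuous_on_compose2[OF ut]
        continuous_on_compose2[OF continuous_on_circle]; simp)+
  have "continuous_on UNIV (\<lambda>y. integral (cbox 0 (2*pi)) (\<lambda>\<theta>. ?F \<theta> y))"
    by (rule integral_continuous_on_param) (auto intro: continuous_on_subset[OF cF'] simp: split_beta)
  then show "(\<lambda>y. integral {0..2*pi} (\<lambda>\<theta>. ?F \<theta> y)) integrable_on unit_cube"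
    unfolding unit_cube_def cbox_interval by (auto intro: integrable_continuous continuous_on_subset)
  show "integral unit_cube (\<lambda>y. integral {0..2*pi} (\<lambda>\<theta>. ?F \<theta> y))
      = integral {0..2*pi} (\<lambda>\<theta>. integral unit_cube (?F \<theta>))"
    unfolding unit_cube_def cbox_interval[symmetric]
    by (rule integral_swap_continuous[symmetric])
      (auto intro: continuous_on_subset[OF cF] simp: split_beta)
qed

text \<open>Averaging the sub-mean value inequalities of the translates \<open>u(\<cdot> - y)\<close> against the
  mollifier gives the sub-mean value inequality of the convolution.\<close>

lemma psh_on_mollification:
  fixes u ut :: "'n::finite cvec \<Rightarrow> real"
  assumes psh: "psh_on \<Omega> u" and ut: "continuous_on UNIV ut" "\<And>z. z \<in> \<Omega> \<Longrightarrow> ut z = u z"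
    and e: "0 < e" and V: "open V" "\<And>z. z \<in> V \<Longrightarrow> ball z e \<subseteq> \<Omega>"
    and w: "continuous_on UNIV w"
    and rep: "\<And>z. z \<in> V \<Longrightarrow> w z = integral unit_cube (\<lambda>y. ut (z - y) * mollifier e y)"
  shows "psh_on V w"
  unfolding psh_on_def
proof (intro conjI allI impI V usc_on_if_continuous_on continuous_on_subset[OF w subset_UNIV])
  fix a b assume disc: "\<forall>\<zeta>. cmod \<zeta> \<le> 1 \<longrightarrow> a + \<zeta> *s b \<in> V"
  let ?g = "\<lambda>\<theta>. a + cis \<theta> *s b"
  let ?F = "\<lambda>\<theta> y. ut (?g \<theta> - y) * mollifier e y"
  have cg: "continuous_on UNIV (\<lambda>\<theta>. w (?g \<theta>))"
    by (rule continuous_on_compose2[OF w continuous_on_circle]) auto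
  show si: "set_integrable lborel {0..2*pi} (\<lambda>\<theta>. w (?g \<theta>))"
    unfolding set_integrable_def
    by (rule borel_integrable_compact) (auto intro: continuous_on_subset[OF cg])
  have translate: "2 * pi * (ut (a - y) * mollifier e y) \<le> integral {0..2*pi} (\<lambda>\<theta>. ?F \<theta> y)" for y
  proof (cases "mollifier e y = 0")
    case False
    then have "norm y < e" using mollifier_eq_0[OF e] by force
    then have "\<forall>\<zeta>. cmod \<zeta> \<le> 1 \<longrightarrow> (a - y) + \<zeta> *s b \<in> \<Omega>"
      using disc V(2) by (force simp: dist_norm algebra_simps)
    from psh_on_sub_mean_value_extension[OF psh ut(2) this]
    have "2 * pi * ut (a - y) \<le> integral {0..2*pi} (\<lambda>\<theta>. ut (?g \<theta> - y))"
      by (simp add: algebra_simps)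
    from mult_right_mono[OF this mollifier_nonneg[OF e, of y]]
    show ?thesis by (simp add: mult.assoc)
  qed simp
  have "2 * pi * w a = integral unit_cube (\<lambda>y. 2 * pi * (ut (a - y) * mollifier e y))"
    using rep disc[rule_format, of 0] by simp
  also have "\<dots> \<le> integral unit_cube (\<lambda>y. integral {0..2*pi} (\<lambda>\<theta>. ?F \<theta> y))"
  proof (rule integral_le)
    show "(\<lambda>y. 2 * pi * (ut (a - y) * mollifier e y)) integrable_on unit_cube"
      unfolding unit_cube_def
      by (intro integrable_continuous continuous_intros continuous_on_mollifier
          continuous_on_compose2[OF ut(1)]) auto
  qed (use translate integrable_circle_integral_translates[OF ut(1) continuous_on_mollifier] in auto)
  also have "\<dots> = integral {0..2*pi} (\<lambda>\<theta>. w (?g \<theta>))"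
    unfolding integral_circle_integral_translates_swap[OF ut(1) continuous_on_mollifier]
    by (rule integral_cong) (simp add: rep disc)
  also have "\<dots> = (LINT \<theta>:{0..2*pi}|lborel. w (?g \<theta>))"
    using set_borel_integral_eq_integral(2)[OF si] by simp
  finally show "w a \<le> (1 / (2*pi)) * (LINT \<theta>:{0..2*pi}|lborel. w (?g \<theta>))"
    by (simp add: field_simps)
qed

lemma uniform_limit_mollification:
  fixes ut :: "'a::euclidean_space \<Rightarrow> real"
  assumes ut: "continuous_on UNIV ut" and V: "bounded V"
    and \<epsilon>: "\<epsilon> \<longlonglongrightarrow> 0" "\<And>j. 0 < \<epsilon> j" "\<And>j. \<epsilon> j \<le> 1"
    and rep: "\<And>j z. z \<in> V \<Longrightarrow> w j z = integral unit_cube (\<lambda>y. ut (z - y) * mollifier (\<epsilon> j) y)"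
  shows "uniform_limit V w ut sequentially"
  unfolding uniform_limit_iff
proof (intro allI impI)
  fix e :: real assume e: "e > 0"
  obtain R where R: "\<And>x. x \<in> V \<Longrightarrow> norm x \<le> R" using V bounded_pos by metis
  let ?K = "cball (0::'a) (R + 1)"
  have "uniformly_continuous_on ?K ut"
    by (rule compact_uniformly_continuous) (auto intro: continuous_on_subset[OF ut])
  then obtain d where d: "d > 0"
    "\<And>x x'. x \<in> ?K \<Longrightarrow> x' \<in> ?K \<Longrightarrow> dist x' x < d \<Longrightarrow> dist (ut x') (ut x) < e / 2"
    unfolding uniformly_continuous_on_def using e by (metis half_gt_zero)
  have "\<forall>\<^sub>F j in sequentially. \<epsilon> j < d" using \<epsilon>(1) d(1) order_tendstoD(2) by blast
  then show "\<forall>\<^sub>F j in sequentially. \<forall>x\<in>V. dist (w j x) (ut x) < e"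
  proof (rule eventually_mono, intro ballI)
    fix j z assume ej: "\<epsilon> j < d" and z: "z \<in> V"
    let ?\<phi> = "mollifier (\<epsilon> j) :: 'a \<Rightarrow> real"
    have int: "(\<lambda>y. g y * ?\<phi> y) integrable_on unit_cube" if "continuous_on UNIV g" for g
      unfolding unit_cube_def
      by (intro integrable_continuous continuous_intros continuous_on_mollifier
          continuous_on_subset[OF that]) simp
    have i1: "(\<lambda>y. ut (z - y) * ?\<phi> y) integrable_on unit_cube"
      by (rule int) (intro continuous_intros continuous_on_compose2[OF ut]; simp)
    have i2: "(\<lambda>y. ut z * ?\<phi> y) integrable_on unit_cube"
      and i3: "(\<lambda>y. e / 2 * ?\<phi> y) integrable_on unit_cube"
      by (rule int, rule continuous_on_const)+
    have "w j z - ut z = integral unit_cube (\<lambda>y. ut (z - y) * ?\<phi> y - ut z * ?\<phi> y)"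
      using rep[OF z] integral_mollifier[where 'a='a, OF \<epsilon>(2)] integral_diff[OF i1 i2] by simp
    also have "norm \<dots> \<le> integral unit_cube (\<lambda>y. e / 2 * ?\<phi> y)"
    proof (rule integral_norm_bound_integral[OF integrable_diff[OF i1 i2] i3])
      fix y :: 'a
      show "norm (ut (z - y) * ?\<phi> y - ut z * ?\<phi> y) \<le> e / 2 * ?\<phi> y"
      proof (cases "?\<phi> y = 0")
        case False
        then have ny: "norm y < \<epsilon> j" using mollifier_eq_0[OF \<epsilon>(2)] by force
        have "z \<in> ?K" "z - y \<in> ?K"
          using R[OF z] ny \<epsilon>(3)[of j] norm_triangle_ineq4[of z y] by auto
        moreover have "dist (z - y) z < d" using ny ej by (simp add: dist_norm)
        ultimately have "\<bar>ut (z - y) - ut z\<bar> \<le> e / 2" using d(2) by (force simp: dist_real_def)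
        from mult_right_mono[OF this mollifier_nonneg[OF \<epsilon>(2)]]
        show ?thesis by (simp add: left_diff_distrib[symmetric] abs_mult mollifier_nonneg[OF \<epsilon>(2)])
      qed simp
    qed
    also have "\<dots> = e / 2" using integral_mollifier[where 'a='a, OF \<epsilon>(2)] by simp
    finally show "dist (w j z) (ut z) < e" using e by (simp add: dist_real_def)
  qed
qed

lemma psh_C2_approximation:
  fixes u ut :: "'n::finite cvec \<Rightarrow> real"
  assumes psh: "psh_on \<Omega> u" and ut: "continuous_on UNIV ut" "\<And>z. z \<in> \<Omega> \<Longrightarrow> ut z = u z"
    and V: "open V" "compact (closure V)" "closure V \<subseteq> \<Omega>"
  obtains w where "\<And>j. Ck_on 2 V (w j)" "\<And>j. psh_on V (w j)" "uniform_limit V w u sequentially"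
proof -
  have "open \<Omega>" using psh by (simp add: psh_on_def)
  then obtain \<delta>0 where \<delta>0: "\<delta>0 > 0" "(\<Union>x\<in>closure V. cball x \<delta>0) \<subseteq> \<Omega>"
    using compact_subset_open_imp_cball_epsilon_subset[OF V(2) _ V(3)] by blast
  define \<epsilon> where "\<epsilon> j = min \<delta>0 1 / real (Suc j)" for j
  have "0 < \<epsilon> j" "\<epsilon> j \<le> min \<delta>0 1" for j
    unfolding \<epsilon>_def using \<delta>0(1) divide_left_mono[of 1 "real (Suc j)" "min \<delta>0 1"] by auto
  then have \<epsilon>: "0 < \<epsilon> j" "\<epsilon> j \<le> 1" "\<epsilon> j \<le> \<delta>0" for j
    using min.bounded_iff by blast+
  have \<epsilon>0: "\<epsilon> \<longlonglongrightarrow> 0"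
    unfolding \<epsilon>_def using LIMSEQ_Suc[OF lim_const_over_n] by simp
  have "bounded V" using V(2) bounded_closure_image compact_imp_bounded bounded_subset closure_subset
    by blast
  obtain R where R: "\<And>x. x \<in> V \<Longrightarrow> norm x \<le> R"
    using \<open>bounded V\<close> bounded_pos by metis
  obtain r where r: "\<And>x. x \<in> (unit_cube::'n cvec set) \<Longrightarrow> norm x \<le> r"
    using bounded_cbox bounded_pos unfolding unit_cube_def by metis
  obtain A :: "'n cvec" where A: "cball 0 (R + r) \<subseteq> cbox (- A) A"
    using bounded_subset_cbox_symmetric[OF bounded_cball] by blast
  define w where "w j = convolution_on (cbox (- A) A) ut (mollifier (\<epsilon> j))" for j
  have rep: "w j z = integral unit_cube (\<lambda>y. ut (z - y) * mollifier (\<epsilon> j) y)" if z: "z \<in> V" for j z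
    unfolding w_def
  proof (rule convolution_on_mollifier_eq[OF ut(1) \<epsilon>(1,2)])
    fix y :: "'n cvec" assume "y \<in> unit_cube"
    then have "norm (z - y) \<le> R + r" using r[of y] R[OF z] norm_triangle_ineq4[of z y] by simp
    then show "z - y \<in> cbox (- A) A" using A by (auto simp: subset_iff)
  qed
  show ?thesis
  proof
    show "Ck_on 2 V (w j)" for j
      unfolding w_def by (rule Ck_on_2_convolution_mollifier[OF ut(1) V(1)])
    show "psh_on V (w j)" for j
    proof (rule psh_on_mollification[OF psh ut \<epsilon>(1) V(1) _ _ rep])
      show "ball z (\<epsilon> j) \<subseteq> \<Omega>" if "z \<in> V" for z
      proof -
        have "ball z (\<epsilon> j) \<subseteq> cball z \<delta>0" using \<epsilon>(3)[of j] by (auto simp: subset_iff)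
        moreover have "cball z \<delta>0 \<subseteq> \<Omega>" using that \<delta>0(2) closure_subset by blast
        ultimately show ?thesis by blast
      qed
      show "continuous_on UNIV (w j)"
        unfolding w_def by (rule continuous_on_convolution_on[OF ut(1) continuous_on_mollifier])
    qed
    have "uniform_limit V w ut sequentially"
      by (rule uniform_limit_mollification[OF ut(1) \<open>bounded V\<close> \<epsilon>0 \<epsilon>(1,2) rep])
    moreover have "\<forall>z\<in>V. ut z = u z" using V(3) closure_subset ut(2) by blast
    ultimately show "uniform_limit V w u sequentially"
      unfolding uniform_limit_iff by simp
  qed
qed

section \<open>Uniqueness of the Monge--Ampere measure\<close>

lemma mem_if_infdist_le:
  fixes S :: "'a::heine_borel set"
  assumes "closed S" "S \<noteq> {}" "(\<Union>x\<in>S. cball x e) \<subseteq> \<Omega>" "infdist y S \<le> e"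
  shows "y \<in> \<Omega>"
proof -
  obtain x where "x \<in> S" "infdist y S = dist y x" using infdist_attains_inf[OF assms(1,2)] by blast
  then show ?thesis using assms(3,4) by (force simp: dist_commute)
qed

lemma is_MA_integral_eq:
  fixes u h :: "'n::finite cvec \<Rightarrow> real"
  assumes psh: "psh_on \<Omega> u" and ut: "continuous_on UNIV ut" "\<And>z. z \<in> \<Omega> \<Longrightarrow> ut z = u z"
    and "bounded \<Omega>" and \<nu>1: "is_MA \<Omega> u \<nu>1" and \<nu>2: "is_MA \<Omega> u \<nu>2"
    and h: "continuous_on UNIV h" "compact (closure {z. h z \<noteq> 0})" "closure {z. h z \<noteq> 0} \<subseteq> \<Omega>"
  shows "integral\<^sup>L \<nu>1 h = integral\<^sup>L \<nu>2 h"
proof (cases "closure {z. h z \<noteq> 0} = {}")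
  case True
  then have "h = (\<lambda>z. 0)" using closure_subset by fastforce
  then show ?thesis by simp
next
  case False
  let ?S = "closure {z. h z \<noteq> 0}"
  have "open \<Omega>" using psh by (simp add: psh_on_def)
  then obtain e where e: "e > 0" "(\<Union>x\<in>?S. cball x e) \<subseteq> \<Omega>"
    using compact_subset_open_imp_cball_epsilon_subset[OF h(2) _ h(3)] by blast
  define V where "V = {y. infdist y ?S < e / 2}"
  have "open V" unfolding V_def by (intro open_Collect_less continuous_intros)
  have "closure V \<subseteq> {y. infdist y ?S \<le> e / 2}"
    unfolding V_def by (rule closure_minimal) (auto intro!: closed_Collect_le continuous_intros)
  then have "closure V \<subseteq> \<Omega>"
    using mem_if_infdist_le[OF closed_closure False e(2)] e(1) by force
  then have "compact (closure V)"
    using \<open>bounded \<Omega>\<close> bounded_subset compact_eq_bounded_closed by blast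
  have "?S \<subseteq> V" unfolding V_def using e(1) by auto
  obtain w where "\<And>j. Ck_on 2 V (w j)" "\<And>j. psh_on V (w j)" "uniform_limit V w u sequentially"
    using psh_C2_approximation[OF psh ut \<open>open V\<close> \<open>compact (closure V)\<close> \<open>closure V \<subseteq> \<Omega>\<close>]
    by blast
  then have "(\<lambda>j. integral\<^sup>L lborel (\<lambda>z. h z * MA_density (w j) z)) \<longlonglongrightarrow> integral\<^sup>L \<nu> h"
    if "is_MA \<Omega> u \<nu>" for \<nu>
    using that h \<open>?S \<subseteq> V\<close> \<open>open V\<close> \<open>compact (closure V)\<close> \<open>closure V \<subseteq> \<Omega>\<close>
    unfolding is_MA_def by blast
  from LIMSEQ_unique[OF this[OF \<nu>1] this[OF \<nu>2]] show ?thesis .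
qed

definition cutoff :: "'a::metric_space set \<Rightarrow> real \<Rightarrow> nat \<Rightarrow> 'a \<Rightarrow> real" where
  "cutoff K e j z = max 0 (1 - real (Suc j) * infdist z K / e)"

lemma continuous_on_cutoff: "continuous_on UNIV (cutoff K e j)"
  unfolding cutoff_def divide_inverse by (intro continuous_intros)

lemma cutoff_eq_0: "0 < e \<Longrightarrow> e \<le> infdist z K \<Longrightarrow> cutoff K e j z = 0"
proof -
  assume "0 < e" "e \<le> infdist z K"
  moreover have "infdist z K \<le> real (Suc j) * infdist z K"
    using infdist_nonneg[of z K] by (simp add: mult_le_cancel_right1)
  ultimately have "e \<le> real (Suc j) * infdist z K" by linarith
  then show ?thesis using \<open>0 < e\<close> by (simp add: cutoff_def field_simps)
qed

lemma cutoff_tendsto_indicator: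
  assumes "closed K" "K \<noteq> {}" "0 < e"
  shows "(\<lambda>j. cutoff K e j z) \<longlonglongrightarrow> indicator K z"
proof (cases "z \<in> K")
  case True
  then show ?thesis by (simp add: cutoff_def)
next
  case False
  then have d: "infdist z K > 0" using infdist_pos_not_in_closed[OF assms(1,2)] by blast
  obtain n :: nat where n: "e / infdist z K < real n" using reals_Archimedean2 by blast
  have "cutoff K e j z = 0" if "n \<le> j" for j
  proof -
    have "e < real (Suc j) * infdist z K"
      using n d that by (simp add: field_simps) (smt (verit, best) mult_right_mono of_nat_mono)
    then show ?thesis using assms(3) by (simp add: cutoff_def max_def field_simps)
  qed
  then have "\<forall>\<^sub>F j in sequentially. cutoff K e j z = 0" unfolding eventually_sequentially by blast
  then show ?thesis using False by (simp add: tendsto_eventually)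
qed

lemma integral_cutoff_tendsto_measure:
  fixes \<nu> :: "'a::euclidean_space measure"
  assumes \<nu>: "sets \<nu> = sets borel" "emeasure \<nu> {z. infdist z K \<le> e} < \<infinity>"
    and K: "closed K" "K \<noteq> {}" and e: "0 < e"
  shows "(\<lambda>j. integral\<^sup>L \<nu> (cutoff K e j)) \<longlonglongrightarrow> measure \<nu> K"
proof -
  let ?T = "{z. infdist z K \<le> e}"
  have space: "space \<nu> = UNIV" using sets_eq_imp_space_eq[OF \<nu>(1)] by simp
  have meas: "g \<in> borel_measurable \<nu>" if "g \<in> borel_measurable borel" for g :: "'a \<Rightarrow> real"
    using that measurable_cong_sets[OF \<nu>(1) refl, of "borel :: real measure"] by simp
  have "(\<lambda>j. integral\<^sup>L \<nu> (cutoff K e j)) \<longlonglongrightarrow> integral\<^sup>L \<nu> (indicator K)"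
  proof (rule integral_dominated_convergence[where w="indicator ?T"])
    show "(indicator K :: 'a \<Rightarrow> real) \<in> borel_measurable \<nu>"
      using K(1) by (intro meas borel_measurable_indicator borel_closed)
    show "cutoff K e j \<in> borel_measurable \<nu>" for j
      by (intro meas borel_measurable_continuous_onI continuous_on_cutoff)
    have "closed ?T" by (intro closed_Collect_le continuous_intros)
    then show "integrable \<nu> (indicator ?T :: 'a \<Rightarrow> real)"
      using \<nu> by (simp add: integrable_indicator_iff)
    show "AE z in \<nu>. (\<lambda>j. cutoff K e j z) \<longlonglongrightarrow> indicator K z"
      using cutoff_tendsto_indicator[OF K e] by simp
    have "norm (cutoff K e j z) \<le> indicator ?T z" for j z
    proof (cases "infdist z K \<le> e")
      case True
      then show ?thesis using e infdist_nonneg[of z K] by (simp add: cutoff_def)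
    qed (simp add: cutoff_eq_0[OF e])
    then show "AE z in \<nu>. norm (cutoff K e j z) \<le> indicator ?T z" for j by simp
  qed
  then show ?thesis using space by simp
qed

lemma emeasure_compact_eq_if_integral_eq:
  fixes \<nu>1 \<nu>2 :: "'a::euclidean_space measure"
  assumes integral_eq: "\<And>h. continuous_on UNIV h \<Longrightarrow> compact (closure {z. h z \<noteq> 0}) \<Longrightarrow>
       closure {z. h z \<noteq> 0} \<subseteq> \<Omega> \<Longrightarrow> integral\<^sup>L \<nu>1 h = integral\<^sup>L \<nu>2 (h :: 'a \<Rightarrow> real)"
    and \<nu>1: "sets \<nu>1 = sets borel" "\<forall>K. compact K \<and> K \<subseteq> \<Omega> \<longrightarrow> emeasure \<nu>1 K < \<infinity>"
    and \<nu>2: "sets \<nu>2 = sets borel" "\<forall>K. compact K \<and> K \<subseteq> \<Omega> \<longrightarrow> emeasure \<nu>2 K < \<infinity>"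
    and \<Omega>: "open \<Omega>" "bounded \<Omega>"
    and K: "compact K" "K \<subseteq> \<Omega>"
  shows "emeasure \<nu>1 K = emeasure \<nu>2 K"
proof (cases "K = {}")
  case False
  have "closed K" using K(1) compact_imp_closed by blast
  obtain e where e: "e > 0" "(\<Union>x\<in>K. cball x e) \<subseteq> \<Omega>"
    using compact_subset_open_imp_cball_epsilon_subset[OF K(1) \<Omega>(1) K(2)] by blast
  let ?T = "{z. infdist z K \<le> e}"
  have "?T \<subseteq> \<Omega>" using mem_if_infdist_le[OF \<open>closed K\<close> False e(2)] by blast
  moreover have "closed ?T" by (intro closed_Collect_le continuous_intros)
  ultimately have "compact ?T" using \<Omega>(2) bounded_subset compact_eq_bounded_closed by blast
  have support: "closure {z. cutoff K e j z \<noteq> 0} \<subseteq> ?T" for j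
    using cutoff_eq_0[OF e(1)] \<open>closed ?T\<close> by (intro closure_minimal) force+
  then have "compact (closure {z. cutoff K e j z \<noteq> 0})" for j
    using compact_Int_closed[OF \<open>compact ?T\<close> closed_closure] by (metis Int_absorb1)
  then have "integral\<^sup>L \<nu>1 (cutoff K e j) = integral\<^sup>L \<nu>2 (cutoff K e j)" for j
    using support \<open>?T \<subseteq> \<Omega>\<close> by (intro integral_eq continuous_on_cutoff) auto
  moreover have tendsto: "(\<lambda>j. integral\<^sup>L \<nu> (cutoff K e j)) \<longlonglongrightarrow> measure \<nu> K"
    if "sets \<nu> = sets borel" "\<forall>K. compact K \<and> K \<subseteq> \<Omega> \<longrightarrow> emeasure \<nu> K < \<infinity>" for \<nu>
    using that \<open>compact ?T\<close> \<open>?T \<subseteq> \<Omega>\<close> \<open>closed K\<close> False e(1)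
    by (intro integral_cutoff_tendsto_measure) auto
  ultimately have "measure \<nu>1 K = measure \<nu>2 K"
    using LIMSEQ_unique[OF tendsto[OF \<nu>1]] tendsto[OF \<nu>2] by simp
  moreover have "emeasure \<nu>1 K \<noteq> \<infinity>" "emeasure \<nu>2 K \<noteq> \<infinity>" using \<nu>1(2) \<nu>2(2) K by auto
  ultimately show ?thesis by (simp add: emeasure_eq_ennreal_measure)
qed simp

definition inner_exhaustion :: "'a::metric_space set \<Rightarrow> nat \<Rightarrow> 'a set" where
  "inner_exhaustion \<Omega> m = {z. inverse (real (Suc m)) \<le> infdist z (- \<Omega>)}"

lemma closed_inner_exhaustion: "closed (inner_exhaustion \<Omega> m)"
  unfolding inner_exhaustion_def by (intro closed_Collect_le continuous_intros)

lemma inner_exhaustion_subset: "inner_exhaustion \<Omega> m \<subseteq> \<Omega>"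
proof
  fix z assume "z \<in> inner_exhaustion \<Omega> m"
  then show "z \<in> \<Omega>" by (cases "z \<in> \<Omega>") (auto simp: inner_exhaustion_def infdist_zero)
qed

lemma incseq_inner_exhaustion: "incseq (inner_exhaustion \<Omega>)"
  unfolding incseq_def inner_exhaustion_def
  by (auto intro: order_trans[rotated] simp: le_imp_inverse_le)

lemma UN_inner_exhaustion:
  assumes "open \<Omega>" "\<Omega> \<noteq> UNIV"
  shows "(\<Union>m. inner_exhaustion \<Omega> m) = \<Omega>"
proof
  show "\<Omega> \<subseteq> (\<Union>m. inner_exhaustion \<Omega> m)"
  proof
    fix z assume "z \<in> \<Omega>"
    then have "infdist z (- \<Omega>) > 0"
      using assms infdist_pos_not_in_closed[of "- \<Omega>" z] by auto
    then obtain n where "n > 0" "inverse (real n) < infdist z (- \<Omega>)"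
      using ex_inverse_of_nat_less by blast
    then have "z \<in> inner_exhaustion \<Omega> (n - 1)" by (simp add: inner_exhaustion_def)
    then show "z \<in> (\<Union>m. inner_exhaustion \<Omega> m)" by blast
  qed
qed (use inner_exhaustion_subset in blast)

lemma emeasure_eq_SUP_inner_exhaustion:
  assumes \<nu>: "sets \<nu> = sets borel" "emeasure \<nu> (UNIV - \<Omega>) = 0"
    and \<Omega>: "open \<Omega>" "\<Omega> \<noteq> UNIV" and A: "A \<in> sets borel"
  shows "emeasure \<nu> A = (SUP m. emeasure \<nu> (inner_exhaustion \<Omega> m \<inter> A))"
proof -
  have "A - \<Omega> \<in> null_sets \<nu>"
    using \<nu> \<Omega>(1) A null_sets_subset[of "UNIV - \<Omega>" \<nu> "A - \<Omega>"] by (auto simp: null_sets_def)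
  then have "emeasure \<nu> A = emeasure \<nu> (A \<inter> \<Omega>)"
    using emeasure_Un_null_set[of "A \<inter> \<Omega>" \<nu> "A - \<Omega>"] \<nu>(1) \<Omega>(1) A by (simp add: Int_Diff_Un)
  also have "A \<inter> \<Omega> = (\<Union>m. inner_exhaustion \<Omega> m \<inter> A)"
    using UN_inner_exhaustion[OF \<Omega>] by blast
  also have "emeasure \<nu> \<dots> = (SUP m. emeasure \<nu> (inner_exhaustion \<Omega> m \<inter> A))"
    using \<nu>(1) A borel_closed[OF closed_inner_exhaustion]
    by (intro SUP_emeasure_incseq[symmetric] monoI Int_mono monoD[OF incseq_inner_exhaustion]
        order_refl) auto
  finally show ?thesis .
qed

text \<open>Closed sets form an \<open>\<inter>\<close>-stable generator of the Borel sets, and on them the two restrictions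
  to the compact set \<open>K\<close> agree.\<close>

lemma emeasure_Int_compact_eq:
  fixes \<nu>1 \<nu>2 :: "'a::euclidean_space measure"
  assumes compact_eq: "\<And>K. compact K \<Longrightarrow> K \<subseteq> \<Omega> \<Longrightarrow> emeasure \<nu>1 K = emeasure \<nu>2 K"
    and \<nu>: "sets \<nu>1 = sets borel" "sets \<nu>2 = sets borel"
    and K: "compact K" "K \<subseteq> \<Omega>" "emeasure \<nu>1 K < \<infinity>" and A: "A \<in> sets borel"
  shows "emeasure \<nu>1 (K \<inter> A) = emeasure \<nu>2 (K \<inter> A)"
proof -
  have "K \<in> sets borel" using K(1) by (simp add: compact_imp_closed)
  then have restrict: "emeasure (density \<nu> (indicator K)) X = emeasure \<nu> (K \<inter> X)"
    if "sets \<nu> = sets borel" "X \<in> sets borel" for \<nu> X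
    using emeasure_restricted[of K \<nu> X] that by simp
  have "density \<nu>1 (indicator K) = density \<nu>2 (indicator K)"
  proof (rule measure_eqI_generator_eq[where E="Collect closed" and \<Omega>=UNIV and A="\<lambda>_. UNIV"])
    show "Int_stable (Collect closed :: 'a set set)" by (auto intro: Int_stableI)
    show "sets (density \<nu>1 (indicator K)) = sigma_sets UNIV (Collect closed)"
      and "sets (density \<nu>2 (indicator K)) = sigma_sets UNIV (Collect closed)"
      using \<nu> by (simp_all add: borel_eq_closed)
    show "emeasure (density \<nu>1 (indicator K)) UNIV \<noteq> \<infinity>"
      using restrict[OF \<nu>(1), of UNIV] K(3) by simp
    fix X :: "'a set" assume "X \<in> Collect closed"
    then have "closed X" by simp
    then have "emeasure \<nu>1 (K \<inter> X) = emeasure \<nu>2 (K \<inter> X)"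
      using compact_eq[OF compact_Int_closed[OF K(1)]] K(2) by blast
    then show "emeasure (density \<nu>1 (indicator K)) X = emeasure (density \<nu>2 (indicator K)) X"
      using restrict \<nu> \<open>closed X\<close> by simp
  qed auto
  then show ?thesis using restrict \<nu> A by metis
qed

lemma measure_eq_if_emeasure_compact_eq:
  fixes \<nu>1 \<nu>2 :: "'a::euclidean_space measure"
  assumes compact_eq: "\<And>K. compact K \<Longrightarrow> K \<subseteq> \<Omega> \<Longrightarrow> emeasure \<nu>1 K = emeasure \<nu>2 K"
    and \<nu>1: "sets \<nu>1 = sets borel" "emeasure \<nu>1 (UNIV - \<Omega>) = 0"
      "\<forall>K. compact K \<and> K \<subseteq> \<Omega> \<longrightarrow> emeasure \<nu>1 K < \<infinity>"
    and \<nu>2: "sets \<nu>2 = sets borel" "emeasure \<nu>2 (UNIV - \<Omega>) = 0"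
    and \<Omega>: "open \<Omega>" "bounded \<Omega>"
  shows "\<nu>1 = \<nu>2"
proof (rule measure_eqI)
  show "sets \<nu>1 = sets \<nu>2" using \<nu>1(1) \<nu>2(1) by simp
  have "\<Omega> \<noteq> UNIV" using \<Omega>(2) by auto
  have "compact (inner_exhaustion \<Omega> m)" for m
    using closed_inner_exhaustion inner_exhaustion_subset \<Omega>(2) bounded_subset
      compact_eq_bounded_closed by metis
  fix A assume "A \<in> sets \<nu>1"
  then have A: "A \<in> sets borel" using \<nu>1(1) by simp
  have "emeasure \<nu>1 (inner_exhaustion \<Omega> m \<inter> A) = emeasure \<nu>2 (inner_exhaustion \<Omega> m \<inter> A)" for m
    using \<open>compact (inner_exhaustion \<Omega> m)\<close> inner_exhaustion_subset \<nu>1(3)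
    by (intro emeasure_Int_compact_eq[OF compact_eq \<nu>1(1) \<nu>2(1) _ _ _ A]) auto
  then show "emeasure \<nu>1 A = emeasure \<nu>2 A"
    using emeasure_eq_SUP_inner_exhaustion[OF \<nu>1(1,2) \<Omega>(1) \<open>\<Omega> \<noteq> UNIV\<close> A]
      emeasure_eq_SUP_inner_exhaustion[OF \<nu>2(1,2) \<Omega>(1) \<open>\<Omega> \<noteq> UNIV\<close> A] by simp
qed

lemma is_MAD:
  assumes "is_MA \<Omega> u \<nu>"
  shows "sets \<nu> = sets borel" "emeasure \<nu> (UNIV - \<Omega>) = 0"
    "\<forall>K. compact K \<and> K \<subseteq> \<Omega> \<longrightarrow> emeasure \<nu> K < \<infinity>"
  using assms unfolding is_MA_def by blast+

lemma is_MA_unique: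
  fixes u :: "'n::finite cvec \<Rightarrow> real"
  assumes psh: "psh_on \<Omega> u" and u: "continuous_on (closure \<Omega>) u" and \<Omega>: "bounded \<Omega>"
    and \<nu>1: "is_MA \<Omega> u \<nu>1" and \<nu>2: "is_MA \<Omega> u \<nu>2"
  shows "\<nu>1 = \<nu>2"
proof -
  have "open \<Omega>" using psh by (simp add: psh_on_def)
  have "closedin (top_of_set UNIV) (closure \<Omega>)" by (simp add: closedin_closed_eq)
  then obtain ut where ut: "continuous_on UNIV ut" "\<And>x. x \<in> closure \<Omega> \<Longrightarrow> ut x = u x"
    using Tietze_unbounded[OF u] by metis
  then have ut': "\<And>x. x \<in> \<Omega> \<Longrightarrow> ut x = u x" using closure_subset by blast
  note MA1 = is_MAD[OF \<nu>1] and MA2 = is_MAD[OF \<nu>2]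
  have "emeasure \<nu>1 K = emeasure \<nu>2 K" if "compact K" "K \<subseteq> \<Omega>" for K
    by (rule emeasure_compact_eq_if_integral_eq[OF is_MA_integral_eq[OF psh ut(1) ut' \<Omega> \<nu>1 \<nu>2]
          MA1(1,3) MA2(1,3) \<open>open \<Omega>\<close> \<Omega> that])
  then show ?thesis
    by (rule measure_eq_if_emeasure_compact_eq[OF _ MA1 MA2(1,2) \<open>open \<Omega>\<close> \<Omega>])
qed

lemma MA_eqI:
  fixes u :: "'n::finite cvec \<Rightarrow> real"
  assumes "psh_on \<Omega> u" "continuous_on (closure \<Omega>) u" "bounded \<Omega>" "is_MA \<Omega> u \<nu>"
  shows "MA \<Omega> u = \<nu>"
  unfolding MA_def
proof (rule the_equality)
  show "is_MA \<Omega> u \<nu>" by (rule assms(4))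
qed (rule is_MA_unique[OF assms(1-3) _ assms(4)])

section \<open>The maximum principle\<close>

lemma psh_on_circle_eq_max:
  assumes psh: "psh_on \<Omega> u" and u: "continuous_on \<Omega> u"
    and disc: "\<forall>\<zeta>. cmod \<zeta> \<le> 1 \<longrightarrow> a + \<zeta> *s b \<in> \<Omega>"
    and max: "\<And>z. z \<in> \<Omega> \<Longrightarrow> u z \<le> u a"
  shows "u (a + b) = u a"
proof -
  let ?g = "\<lambda>\<theta>. u a - u (a + cis \<theta> *s b)"
  have circle: "a + cis \<theta> *s b \<in> \<Omega>" for \<theta> using disc by simp
  have cg: "continuous_on {0..2*pi} ?g"
    by (intro continuous_intros continuous_on_compose2[OF u]
        continuous_on_subset[OF continuous_on_circle]) (auto simp: circle)
  have g_nonneg: "?g \<theta> \<ge> 0" for \<theta> using max[OF circle] by simp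
  have "integral {0..2*pi} ?g = 2 * pi * u a - integral {0..2*pi} (\<lambda>\<theta>. u (a + cis \<theta> *s b))"
    using integral_diff[OF integrable_const_ivl psh_on_circle_integrable[OF psh disc]] by simp
  also have "\<dots> \<le> 0" using psh_on_sub_mean_value[OF psh disc] by simp
  finally have "integral {0..2*pi} ?g = 0"
    using integral_nonneg[OF integrable_continuous_interval[OF cg] g_nonneg] by linarith
  then have "\<forall>\<theta>\<in>{0..2*pi}. ?g \<theta> = 0" using integral_eq_0_iff[OF cg _ g_nonneg] by simp
  from bspec[OF this, of 0] pi_gt_zero show ?thesis by simp
qed

lemma axis_disc_subset_ball:
  fixes a :: "'n::finite cvec"
  assumes "0 < r" "cmod \<zeta> \<le> 1"
  shows "a + \<zeta> *s axis i (complex_of_real (r / 2)) \<in> ball a r"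
proof -
  let ?b = "axis i (complex_of_real (r / 2)) :: 'n cvec"
  have "norm (\<zeta> *s ?b) \<le> (\<Sum>j\<in>UNIV. norm ((\<zeta> *s ?b) $ j))"
    by (simp add: norm_vec_def L2_set_le_sum)
  also have "\<dots> = (\<Sum>j\<in>UNIV. if j = i then cmod \<zeta> * (r / 2) else 0)"
    by (rule sum.cong) (use assms(1) in \<open>auto simp: axis_def norm_mult\<close>)
  also have "\<dots> = cmod \<zeta> * (r / 2)" by simp
  also have "\<dots> \<le> 1 * (r / 2)" using assms by (intro mult_right_mono) auto
  finally show ?thesis using assms(1) by (simp add: dist_norm)
qed

text \<open>At a point of the (compact) maximum set with maximal real part of some coordinate,
  the mean value property on a small disc in that coordinate direction pushes the maximum further.\<close>

lemma psh_on_nonpos_if_frontier_nonpos: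
  fixes u :: "'n::finite cvec \<Rightarrow> real"
  assumes psh: "psh_on \<Omega> u" and u: "continuous_on (closure \<Omega>) u" and "bounded \<Omega>"
    and frontier: "\<forall>z\<in>frontier \<Omega>. u z \<le> 0" and "z \<in> \<Omega>"
  shows "u z \<le> 0"
proof (rule ccontr)
  assume "\<not> u z \<le> 0"
  have "compact (closure \<Omega>)" using \<open>bounded \<Omega>\<close> by (simp add: compact_closure)
  then obtain zm where zm: "zm \<in> closure \<Omega>" "\<And>y. y \<in> closure \<Omega> \<Longrightarrow> u y \<le> u zm"
    using continuous_attains_sup[OF _ _ u] \<open>z \<in> \<Omega>\<close> closure_subset by blast
  define M where "M = u zm"
  have "M > 0" using zm(2)[of z] \<open>\<not> u z \<le> 0\<close> \<open>z \<in> \<Omega>\<close> closure_subset M_def by force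
  define S where "S = {y \<in> closure \<Omega>. u y = M}"
  have "closed S"
    unfolding S_def by (rule continuous_closed_preimage_constant[OF u closed_closure])
  moreover have "S \<subseteq> closure \<Omega>" unfolding S_def by blast
  ultimately have "compact S"
    using bounded_subset[OF bounded_closure[OF \<open>bounded \<Omega>\<close>]] compact_eq_bounded_closed by blast
  obtain i0 :: 'n where True by blast
  have "S \<noteq> {}" using zm(1) by (auto simp: S_def M_def)
  moreover have "continuous_on S (\<lambda>y. Re (y $ i0))" by (intro continuous_intros)
  ultimately obtain a where a: "a \<in> S" "\<And>y. y \<in> S \<Longrightarrow> Re (y $ i0) \<le> Re (a $ i0)"
    using continuous_attains_sup[OF \<open>compact S\<close>] by blast
  then have "a \<in> closure \<Omega>" "u a = M" by (simp_all add: S_def)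
  then have "a \<notin> frontier \<Omega>" using frontier \<open>M > 0\<close> by auto
  then have "a \<in> \<Omega>" using \<open>a \<in> closure \<Omega>\<close> closure_Un_frontier by blast
  moreover have "open \<Omega>" using psh by (simp add: psh_on_def)
  ultimately obtain r where r: "r > 0" "ball a r \<subseteq> \<Omega>" using openE by blast
  define b where "b = axis i0 (complex_of_real (r / 2))"
  have "a + \<zeta> *s b \<in> ball a r" if "cmod \<zeta> \<le> 1" for \<zeta>
    unfolding b_def by (rule axis_disc_subset_ball[OF r(1) that])
  then have disc: "\<forall>\<zeta>. cmod \<zeta> \<le> 1 \<longrightarrow> a + \<zeta> *s b \<in> \<Omega>" using r(2) by blast
  have "u (a + b) = u a"
  proof (rule psh_on_circle_eq_max[OF psh continuous_on_subset[OF u closure_subset] disc])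
    show "u y \<le> u a" if "y \<in> \<Omega>" for y
      using zm(2)[OF subsetD[OF closure_subset that]] \<open>u a = M\<close> by (simp add: M_def)
  qed
  moreover have "a + b \<in> \<Omega>" using disc[rule_format, of 1] by simp
  ultimately have "a + b \<in> S" using \<open>u a = M\<close> closure_subset by (auto simp: S_def)
  from a(2)[OF this] r(1) show False by (simp add: b_def)
qed

section \<open>Hoelder's inequality\<close>

lemma young_power_ineq:
  fixes x y :: real
  assumes "x \<ge> 0" "y \<ge> 0"
  shows "x * y ^ n \<le> (x ^ Suc n + real n * y ^ Suc n) / real (Suc n)"
proof (cases "y = 0")
  case True
  then show ?thesis using assms by (cases n) auto
next
  case False
  then have "y > 0" using assms by simp
  have "1 + real (Suc n) * (x / y - 1) \<le> x ^ Suc n / y ^ Suc n"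
    using Bernoulli_inequality[of "x / y - 1" "Suc n"] assms \<open>y > 0\<close> by (simp add: power_divide)
  then have "(1 + real (Suc n) * (x / y - 1)) * y ^ Suc n \<le> x ^ Suc n"
    using \<open>y > 0\<close> by (simp add: pos_le_divide_eq)
  also have "(1 + real (Suc n) * (x / y - 1)) * y ^ Suc n
      = y ^ Suc n + real (Suc n) * x * y ^ n - real (Suc n) * y ^ Suc n"
    using \<open>y > 0\<close> by (simp add: field_simps)
  finally have "real (Suc n) * (x * y ^ n) \<le> x ^ Suc n + real n * y ^ Suc n"
    by (simp add: algebra_simps)
  then show ?thesis by (simp add: field_simps)
qed

lemma root_power_eq:
  fixes c :: real
  assumes "0 \<le> c"
  shows "(c powr (1 / real (Suc n))) ^ Suc n = c"
proof (cases "c = 0")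
  case False
  then have "(c powr (1 / real (Suc n))) ^ Suc n = (c powr (1 / real (Suc n))) powr real (Suc n)"
    using assms by (intro powr_realpow[symmetric]) simp
  also have "\<dots> = c" using assms by (simp add: powr_powr del: of_nat_Suc)
  finally show ?thesis .
qed simp

lemma set_integral_nonneg:
  fixes g :: "'a \<Rightarrow> real"
  assumes "\<And>z. z \<in> A \<Longrightarrow> 0 \<le> g z"
  shows "0 \<le> (LINT z:A|M. g z)"
  unfolding set_lebesgue_integral_def
  by (rule integral_nonneg_AE) (use assms in \<open>auto simp: indicator_def\<close>)

text \<open>Young's inequality applied to \<open>X / \<alpha>\<close> and \<open>Y / \<beta>\<close>, with \<open>\<alpha>, \<beta>\<close> the two norms, integrates to
  \<open>1\<close>.\<close>

lemma set_integral_holder: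
  fixes X Y f :: "'a \<Rightarrow> real"
  assumes int: "set_integrable M \<Omega> (\<lambda>z. X z ^ Suc n * f z)"
      "set_integrable M \<Omega> (\<lambda>z. Y z ^ Suc n * f z)"
      "set_integrable M \<Omega> (\<lambda>z. X z * Y z ^ n * f z)"
    and nonneg: "\<And>z. z \<in> \<Omega> \<Longrightarrow> X z \<ge> 0" "\<And>z. z \<in> \<Omega> \<Longrightarrow> Y z \<ge> 0"
      "\<And>z. z \<in> \<Omega> \<Longrightarrow> f z \<ge> 0"
    and pos: "(LINT z:\<Omega>|M. X z ^ Suc n * f z) > 0" "(LINT z:\<Omega>|M. Y z ^ Suc n * f z) > 0"
  shows "(LINT z:\<Omega>|M. X z * Y z ^ n * f z) \<le>
     (LINT z:\<Omega>|M. X z ^ Suc n * f z) powr (1 / real (Suc n)) *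
     ((LINT z:\<Omega>|M. Y z ^ Suc n * f z) powr (1 / real (Suc n))) ^ n"
proof -
  define a where "a = (LINT z:\<Omega>|M. X z ^ Suc n * f z)"
  define b where "b = (LINT z:\<Omega>|M. Y z ^ Suc n * f z)"
  define \<alpha> where "\<alpha> = a powr (1 / real (Suc n))"
  define \<beta> where "\<beta> = b powr (1 / real (Suc n))"
  have "a > 0" "b > 0" using pos by (simp_all add: a_def b_def)
  then have "\<alpha> > 0" "\<beta> > 0" "\<alpha> ^ Suc n = a" "\<beta> ^ Suc n = b"
    using root_power_eq[of a n] root_power_eq[of b n] by (simp_all add: \<alpha>_def \<beta>_def)
  have pointwise: "X z * Y z ^ n * f z \<le>
      \<alpha> * \<beta> ^ n * ((X z ^ Suc n * f z) / a + real n * (Y z ^ Suc n * f z) / b) / real (Suc n)"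
    if "z \<in> \<Omega>" for z
  proof -
    have "(X z / \<alpha>) * (Y z / \<beta>) ^ n \<le> ((X z / \<alpha>) ^ Suc n + real n * (Y z / \<beta>) ^ Suc n) / real (Suc n)"
      using nonneg(1,2)[OF that] \<open>\<alpha> > 0\<close> \<open>\<beta> > 0\<close> by (intro young_power_ineq) auto
    then have "(\<alpha> * \<beta> ^ n * f z) * ((X z / \<alpha>) * (Y z / \<beta>) ^ n) \<le>
        (\<alpha> * \<beta> ^ n * f z) * (((X z / \<alpha>) ^ Suc n + real n * (Y z / \<beta>) ^ Suc n) / real (Suc n))"
      using nonneg(3)[OF that] \<open>\<alpha> > 0\<close> \<open>\<beta> > 0\<close> by (intro mult_left_mono) auto
    also have "(\<alpha> * \<beta> ^ n * f z) * ((X z / \<alpha>) * (Y z / \<beta>) ^ n) = X z * Y z ^ n * f z"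
      using \<open>\<alpha> > 0\<close> \<open>\<beta> > 0\<close> by (simp add: field_simps power_divide)
    also have "(\<alpha> * \<beta> ^ n * f z) * (((X z / \<alpha>) ^ Suc n + real n * (Y z / \<beta>) ^ Suc n) / real (Suc n))
       = \<alpha> * \<beta> ^ n * ((X z ^ Suc n * f z) / \<alpha> ^ Suc n + real n * (Y z ^ Suc n * f z) / \<beta> ^ Suc n)
           / real (Suc n)"
      using \<open>\<alpha> > 0\<close> \<open>\<beta> > 0\<close> by (simp add: field_simps power_divide)
    finally show ?thesis using \<open>\<alpha> ^ Suc n = a\<close> \<open>\<beta> ^ Suc n = b\<close> by simp
  qed
  have "(LINT z:\<Omega>|M. X z * Y z ^ n * f z) \<le>
      (LINT z:\<Omega>|M. \<alpha> * \<beta> ^ n * ((X z ^ Suc n * f z) / a + real n * (Y z ^ Suc n * f z) / b) / real (Suc n))"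
    using int pointwise
    by (intro set_integral_mono) (auto intro!: set_integral_add set_integrable_divide set_integrable_mult_right)
  also have "\<dots> = \<alpha> * \<beta> ^ n * (a / a + real n * b / b) / real (Suc n)"
    using int(1,2) by (simp add: set_integral_add set_integrable_divide a_def b_def)
  also have "\<dots> = \<alpha> * \<beta> ^ n" using \<open>a > 0\<close> \<open>b > 0\<close> by (simp add: field_simps)
  finally show ?thesis by (simp add: \<alpha>_def \<beta>_def a_def b_def)
qed

section \<open>The iteration\<close>

definition weighted_norm :: "nat \<Rightarrow> 'a::euclidean_space set \<Rightarrow> ('a \<Rightarrow> real) \<Rightarrow> ('a \<Rightarrow> real) \<Rightarrow> real"
  where "weighted_norm p \<Omega> f \<phi> = (LINT z:\<Omega>|lborel. \<bar>\<phi> z\<bar> ^ p * f z) powr (1 / real p)"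

lemma weighted_norm_nonneg: "0 \<le> weighted_norm p \<Omega> f \<phi>"
  by (simp add: weighted_norm_def)

lemma weighted_norm_power:
  assumes "\<And>z. z \<in> \<Omega> \<Longrightarrow> 0 \<le> f z"
  shows "weighted_norm (Suc n) \<Omega> f \<phi> ^ Suc n = (LINT z:\<Omega>|lborel. \<bar>\<phi> z\<bar> ^ Suc n * f z)"
  unfolding weighted_norm_def using assms by (intro root_power_eq set_integral_nonneg) simp

lemma set_integrable_continuous_on_closure:
  fixes g :: "'a::euclidean_space \<Rightarrow> real"
  assumes "bounded \<Omega>" "open \<Omega>" "continuous_on (closure \<Omega>) g"
  shows "set_integrable lborel \<Omega> g"
proof -
  have "set_integrable lborel (closure \<Omega>) g"
    unfolding set_integrable_def using assms(1,3) by (intro borel_integrable_compact) auto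
  then show ?thesis
    by (rule set_integrable_subset) (use assms(2) closure_subset in auto)
qed

lemma set_integral_density_indicator:
  fixes g h :: "'a \<Rightarrow> real"
  assumes "set_borel_measurable M \<Omega> g" "set_borel_measurable M \<Omega> h" "\<And>z. z \<in> \<Omega> \<Longrightarrow> 0 \<le> g z"
  shows "(LINT z:\<Omega>|density M (\<lambda>z. ennreal (indicator \<Omega> z * g z)). h z) = (LINT z:\<Omega>|M. g z * h z)"
proof -
  have "(LINT z:\<Omega>|density M (\<lambda>z. ennreal (indicator \<Omega> z * g z)). h z)
      = integral\<^sup>L M (\<lambda>z. (indicator \<Omega> z * g z) *\<^sub>R (indicator \<Omega> z *\<^sub>R h z))"
    unfolding set_lebesgue_integral_def
    using assms by (intro integral_density) (auto simp: set_borel_measurable_def indicator_def)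
  also have "\<dots> = (LINT z:\<Omega>|M. g z * h z)"
    unfolding set_lebesgue_integral_def by (intro Bochner_Integration.integral_cong) (auto simp: indicator_def)
  finally show ?thesis .
qed

lemma Rq_eq:
  fixes \<phi> :: "'n::finite cvec \<Rightarrow> real"
  assumes "open \<Omega>" "\<And>z. z \<in> \<Omega> \<Longrightarrow> \<phi> z \<le> 0" "\<And>z. z \<in> \<Omega> \<Longrightarrow> 0 \<le> f z"
  shows "Rq \<Omega> f \<phi> = (LINT z:\<Omega>|MA \<Omega> \<phi>. - \<phi> z) / weighted_norm (Suc CARD('n)) \<Omega> f \<phi> ^ Suc CARD('n)"
proof -
  have "(LINT z:\<Omega>|lborel. (- \<phi> z) ^ (CARD('n) + 1) * f z)
      = (LINT z:\<Omega>|lborel. \<bar>\<phi> z\<bar> ^ Suc CARD('n) * f z)"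
    using assms(1,2) by (intro set_lebesgue_integral_cong) (auto simp: abs_of_nonpos)
  also have "\<dots> = weighted_norm (Suc CARD('n)) \<Omega> f \<phi> ^ Suc CARD('n)"
    by (rule weighted_norm_power[OF assms(3), symmetric])
  finally show ?thesis by (simp only: Rq_def)
qed

lemma Rq_nonneg:
  fixes \<phi> :: "'n::finite cvec \<Rightarrow> real"
  assumes "open \<Omega>" "\<And>z. z \<in> \<Omega> \<Longrightarrow> \<phi> z \<le> 0" "\<And>z. z \<in> \<Omega> \<Longrightarrow> 0 \<le> f z"
  shows "0 \<le> Rq \<Omega> f \<phi>"
proof -
  have num: "0 \<le> (LINT z:\<Omega>|MA \<Omega> \<phi>. - \<phi> z)" using assms(2) by (intro set_integral_nonneg) simp
  show ?thesis
    using num by (simp add: Rq_eq[OF assms] weighted_norm_nonneg)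
qed

lemma set_integral_MA_eq_Rq_mult:
  fixes v w :: "'n::finite cvec \<Rightarrow> real"
  assumes \<Omega>: "open \<Omega>"
    and f: "continuous_on (closure \<Omega>) f" "\<And>z. z \<in> \<Omega> \<Longrightarrow> 0 \<le> f z"
    and v: "continuous_on (closure \<Omega>) v" "\<And>z. z \<in> \<Omega> \<Longrightarrow> v z \<le> 0"
    and w: "continuous_on (closure \<Omega>) w" "\<And>z. z \<in> \<Omega> \<Longrightarrow> w z \<le> 0"
    and MA: "MA \<Omega> v = density lborel (\<lambda>z. ennreal (indicator \<Omega> z * (Rq \<Omega> f w * (- w z) ^ CARD('n) * f z)))"
  shows "(LINT z:\<Omega>|MA \<Omega> v. - v z) = Rq \<Omega> f w * (LINT z:\<Omega>|lborel. \<bar>v z\<bar> * \<bar>w z\<bar> ^ CARD('n) * f z)"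
proof -
  have meas: "set_borel_measurable lborel \<Omega> g" if "continuous_on (closure \<Omega>) g" for g :: "'n cvec \<Rightarrow> real"
    unfolding set_borel_measurable_def
    using borel_measurable_continuous_on_indicator[OF _ continuous_on_subset[OF that closure_subset]] \<Omega>
    by simp
  have "(LINT z:\<Omega>|MA \<Omega> v. - v z) = (LINT z:\<Omega>|lborel. Rq \<Omega> f w * (- w z) ^ CARD('n) * f z * - v z)"
    unfolding MA using Rq_nonneg[OF \<Omega> w(2) f(2)] w(2) f(2)
    by (intro set_integral_density_indicator meas continuous_intros f w v) auto
  also have "\<dots> = Rq \<Omega> f w * (LINT z:\<Omega>|lborel. \<bar>v z\<bar> * \<bar>w z\<bar> ^ CARD('n) * f z)"
    unfolding set_integral_mult_right[symmetric] using \<Omega> v(2) w(2)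
    by (intro set_lebesgue_integral_cong) (auto simp: abs_of_nonpos)
  finally show ?thesis .
qed

lemma weighted_norm_holder:
  fixes v w :: "'a::euclidean_space \<Rightarrow> real"
  assumes \<Omega>: "bounded \<Omega>" "open \<Omega>"
    and f: "continuous_on (closure \<Omega>) f" "\<And>z. z \<in> \<Omega> \<Longrightarrow> 0 \<le> f z"
    and v: "continuous_on (closure \<Omega>) v" and w: "continuous_on (closure \<Omega>) w"
    and pos: "0 < weighted_norm (Suc n) \<Omega> f v" "0 < weighted_norm (Suc n) \<Omega> f w"
  shows "(LINT z:\<Omega>|lborel. \<bar>v z\<bar> * \<bar>w z\<bar> ^ n * f z)
           \<le> weighted_norm (Suc n) \<Omega> f v * weighted_norm (Suc n) \<Omega> f w ^ n"
  unfolding weighted_norm_def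
proof (rule set_integral_holder)
  show "set_integrable lborel \<Omega> (\<lambda>z. \<bar>v z\<bar> ^ Suc n * f z)"
    "set_integrable lborel \<Omega> (\<lambda>z. \<bar>w z\<bar> ^ Suc n * f z)"
    "set_integrable lborel \<Omega> (\<lambda>z. \<bar>v z\<bar> * \<bar>w z\<bar> ^ n * f z)"
    by (intro set_integrable_continuous_on_closure[OF \<Omega>] continuous_intros v w f)+
  have "0 < weighted_norm (Suc n) \<Omega> f v ^ Suc n" "0 < weighted_norm (Suc n) \<Omega> f w ^ Suc n"
    using pos by simp_all
  then show "0 < (LINT z:\<Omega>|lborel. \<bar>v z\<bar> ^ Suc n * f z)" "0 < (LINT z:\<Omega>|lborel. \<bar>w z\<bar> ^ Suc n * f z)"
    by (simp_all only: weighted_norm_power[OF f(2)])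
qed (use f(2) in auto)

lemma Rq_weighted_norm_step:
  fixes v w :: "'n::finite cvec \<Rightarrow> real"
  assumes \<Omega>: "open \<Omega>" "bounded \<Omega>"
    and f: "continuous_on (closure \<Omega>) f" "\<And>z. z \<in> \<Omega> \<Longrightarrow> 0 < f z"
    and v: "continuous_on (closure \<Omega>) v" "\<And>z. z \<in> \<Omega> \<Longrightarrow> v z \<le> 0"
    and w: "continuous_on (closure \<Omega>) w" "\<And>z. z \<in> \<Omega> \<Longrightarrow> w z \<le> 0"
    and MA: "MA \<Omega> v = density lborel (\<lambda>z. ennreal (indicator \<Omega> z * (Rq \<Omega> f w * (- w z) ^ CARD('n) * f z)))"
  shows "Rq \<Omega> f v * weighted_norm (Suc CARD('n)) \<Omega> f v ^ CARD('n)
           \<le> Rq \<Omega> f w * weighted_norm (Suc CARD('n)) \<Omega> f w ^ CARD('n)"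
proof -
  let ?n = "CARD('n)"
  let ?N = "\<lambda>\<phi>. weighted_norm (Suc ?n) \<Omega> f \<phi>"
  have f0: "\<And>z. z \<in> \<Omega> \<Longrightarrow> 0 \<le> f z" using f(2) less_imp_le by blast
  define Q where "Q = (LINT z:\<Omega>|lborel. \<bar>v z\<bar> * \<bar>w z\<bar> ^ ?n * f z)"
  have Rv: "Rq \<Omega> f v = Rq \<Omega> f w * Q / ?N v ^ Suc ?n"
    using Rq_eq[OF \<Omega>(1) v(2) f0] set_integral_MA_eq_Rq_mult[OF \<Omega>(1) f(1) f0 v w MA]
    by (simp add: Q_def)
  have Rw: "Rq \<Omega> f w = (LINT z:\<Omega>|MA \<Omega> w. - w z) / ?N w ^ Suc ?n"
    using Rq_eq[OF \<Omega>(1) w(2) f0] .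
  have "0 \<le> Rq \<Omega> f w" by (rule Rq_nonneg[OF \<Omega>(1) w(2) f0])
  show ?thesis
  proof (cases "?N v = 0 \<or> ?N w = 0")
    case True
    then consider "?N v = 0" | "?N w = 0" by blast
    then show ?thesis
    proof cases
      case 1
      have "0 \<le> Rq \<Omega> f w * ?N w ^ ?n"
        by (intro mult_nonneg_nonneg zero_le_power weighted_norm_nonneg \<open>0 \<le> Rq \<Omega> f w\<close>)
      moreover have "Rq \<Omega> f v * ?N v ^ ?n = 0"
        using 1 zero_less_card_finite[where 'a='n] by (simp add: zero_power)
      ultimately show ?thesis by linarith
    next
      case 2
      then have "Rq \<Omega> f w = 0" using Rw by simp
      moreover from this have "Rq \<Omega> f v = 0" using Rv by (simp only: mult_zero_left div_0)
      ultimately show ?thesis by (simp only: mult_zero_left order_refl)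
    qed
  next
    case False
    then have pos: "0 < ?N v" "0 < ?N w" using weighted_norm_nonneg by (simp_all add: less_le)
    have "Q \<le> ?N v * ?N w ^ ?n"
      unfolding Q_def by (rule weighted_norm_holder[OF \<Omega>(2,1) f(1) f0 v(1) w(1) pos])
    have "Rq \<Omega> f v * ?N v ^ ?n = Rq \<Omega> f w * Q / ?N v"
      unfolding Rv using pos(1) by (simp add: field_simps)
    also have "\<dots> \<le> Rq \<Omega> f w * (?N v * ?N w ^ ?n) / ?N v"
      using \<open>Q \<le> ?N v * ?N w ^ ?n\<close> pos \<open>0 \<le> Rq \<Omega> f w\<close>
      by (intro divide_right_mono mult_left_mono) auto
    also have "\<dots> = Rq \<Omega> f w * ?N w ^ ?n" using pos(1) by simp
    finally show ?thesis .
  qed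
qed

lemma power_density_powr_le:
  fixes R u f S :: real
  assumes n: "n \<ge> 1" and R: "R \<ge> 0" and u: "u \<le> 0" and f: "0 < f" "f \<le> S"
  shows "\<bar>R * (- u) ^ n * f\<bar> powr (1 + 1 / real n)
           \<le> R powr (1 + 1 / real n) * S powr (1 / real n) * (\<bar>u\<bar> ^ Suc n * f)"
proof -
  let ?p = "1 + 1 / real n"
  have "\<bar>R * (- u) ^ n * f\<bar> powr ?p = R powr ?p * (\<bar>u\<bar> ^ n) powr ?p * f powr ?p"
    using R f by (simp add: abs_mult power_abs powr_mult)
  also have "(\<bar>u\<bar> ^ n) powr ?p = \<bar>u\<bar> ^ Suc n"
  proof (cases "u = 0")
    case False
    then have "(\<bar>u\<bar> ^ n) powr ?p = \<bar>u\<bar> powr (real n * ?p)"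
      by (simp add: powr_realpow[symmetric] powr_powr)
    also have "real n * ?p = real (Suc n)" using n by (simp add: field_simps)
    also have "\<bar>u\<bar> powr real (Suc n) = \<bar>u\<bar> ^ Suc n"
      using False by (intro powr_realpow) simp
    finally show ?thesis .
  qed (use n in simp)
  also have "f powr ?p = f * f powr (1 / real n)" using f by (simp add: powr_add)
  also have "R powr ?p * \<bar>u\<bar> ^ Suc n * (f * f powr (1 / real n))
      \<le> R powr ?p * \<bar>u\<bar> ^ Suc n * (f * S powr (1 / real n))"
    using f by (intro mult_left_mono powr_mono2) auto
  finally show ?thesis by (simp add: algebra_simps)
qed

lemma powr_conjugate_exponent:
  fixes R S P :: real
  assumes n: "n \<ge> 1" and R: "R \<ge> 0" and P: "P \<ge> 0"
  shows "(R powr (1 + 1 / real n) * S powr (1 / real n) * P) powr (1 / (1 + 1 / real n))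
     = S powr (1 / real (Suc n)) * R * (P powr (1 / real (Suc n))) ^ n"
proof -
  have q: "1 / (1 + 1 / real n) = real n / real (Suc n)" using n by (simp add: field_simps)
  have "0 < 1 + 1 / real n" by (simp add: add_pos_nonneg)
  then have "(R powr (1 + 1 / real n)) powr (1 / (1 + 1 / real n)) = R"
    using R by (simp add: powr_powr)
  moreover have "(S powr (1 / real n)) powr (1 / (1 + 1 / real n)) = S powr (1 / real (Suc n))"
    using n by (simp add: powr_powr q)
  moreover have "P powr (1 / (1 + 1 / real n)) = (P powr (1 / real (Suc n))) ^ n"
  proof (cases "P = 0")
    case False
    then have "(P powr (1 / real (Suc n))) ^ n = (P powr (1 / real (Suc n))) powr real n"
      using P by (intro powr_realpow[symmetric]) simp
    then show ?thesis by (simp add: powr_powr q del: of_nat_Suc)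
  qed (use n in simp)
  ultimately show ?thesis by (simp add: powr_mult)
qed

lemma Lp_norm_density_le:
  fixes \<phi> f :: "'a::euclidean_space \<Rightarrow> real"
  assumes n: "1 \<le> n" and R: "0 \<le> R"
    and \<phi>: "\<And>z. z \<in> \<Omega> \<Longrightarrow> \<phi> z \<le> 0" and f: "\<And>z. z \<in> \<Omega> \<Longrightarrow> 0 < f z" "\<And>z. z \<in> \<Omega> \<Longrightarrow> f z \<le> S"
    and int: "set_integrable lborel \<Omega> (\<lambda>z. \<bar>\<phi> z\<bar> ^ Suc n * f z)"
  shows "(LINT z:\<Omega>|lborel. \<bar>R * (- \<phi> z) ^ n * f z\<bar> powr (1 + 1 / real n)) powr (1 / (1 + 1 / real n))
           \<le> S powr (1 / real (Suc n)) * R * weighted_norm (Suc n) \<Omega> f \<phi> ^ n"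
proof -
  let ?p = "1 + 1 / real n"
  let ?P = "LINT z:\<Omega>|lborel. \<bar>\<phi> z\<bar> ^ Suc n * f z"
  have "(LINT z:\<Omega>|lborel. \<bar>R * (- \<phi> z) ^ n * f z\<bar> powr ?p)
      \<le> (LINT z:\<Omega>|lborel. R powr ?p * S powr (1 / real n) * (\<bar>\<phi> z\<bar> ^ Suc n * f z))"
    unfolding set_lebesgue_integral_def
  proof (rule integral_mono')
    have "set_integrable lborel \<Omega> (\<lambda>z. R powr ?p * S powr (1 / real n) * (\<bar>\<phi> z\<bar> ^ Suc n * f z))"
      using int by (rule set_integrable_mult_right)
    then show "integrable lborel
        (\<lambda>z. indicator \<Omega> z *\<^sub>R (R powr ?p * S powr (1 / real n) * (\<bar>\<phi> z\<bar> ^ Suc n * f z)))"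
      unfolding set_integrable_def .
    show "indicator \<Omega> z *\<^sub>R \<bar>R * (- \<phi> z) ^ n * f z\<bar> powr ?p
        \<le> indicator \<Omega> z *\<^sub>R (R powr ?p * S powr (1 / real n) * (\<bar>\<phi> z\<bar> ^ Suc n * f z))" for z
      using power_density_powr_le[OF n R \<phi> f, of z] by (auto simp: indicator_def)
    show "0 \<le> indicator \<Omega> z *\<^sub>R (R powr ?p * S powr (1 / real n) * (\<bar>\<phi> z\<bar> ^ Suc n * f z))"
      for z using f(1)[of z] by (auto simp: indicator_def intro!: mult_nonneg_nonneg)
  qed
  also have "\<dots> = R powr ?p * S powr (1 / real n) * ?P" by simp
  finally have "(LINT z:\<Omega>|lborel. \<bar>R * (- \<phi> z) ^ n * f z\<bar> powr ?p) powr (1 / ?p)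
      \<le> (R powr ?p * S powr (1 / real n) * ?P) powr (1 / ?p)"
    by (intro powr_mono2 set_integral_nonneg) (auto simp: add_pos_nonneg)
  also have "\<dots> = S powr (1 / real (Suc n)) * R * weighted_norm (Suc n) \<Omega> f \<phi> ^ n"
    unfolding weighted_norm_def
    by (intro powr_conjugate_exponent n R set_integral_nonneg mult_nonneg_nonneg zero_le_power
        abs_ge_zero less_imp_le[OF f(1)])
  finally show ?thesis .
qed

lemma continuous_on_closure_if_smooth_on_closure:
  assumes "smooth_on_closure \<Omega> f"
  shows "continuous_on (closure \<Omega>) f"
proof -
  obtain U h where Uh: "closure \<Omega> \<subseteq> U" "smooth_on U h" "\<forall>z\<in>closure \<Omega>. h z = f z"
    using assms unfolding smooth_on_closure_def by blast
  from Uh(2) have "Ck_on 0 U h" unfolding smooth_on_def by blast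
  then have "continuous_on U (iter_deriv [] h)"
    unfolding Ck_on_def by (elim conjE allE[of _ "[]"]) simp
  then have "continuous_on (closure \<Omega>) h" using Uh(1) continuous_on_subset by auto
  then show ?thesis using Uh(3) continuous_on_eq by blast
qed

lemma le_Sup_image_if_continuous_on_closure:
  fixes f :: "'a::euclidean_space \<Rightarrow> real"
  assumes "bounded \<Omega>" "continuous_on (closure \<Omega>) f" "z \<in> \<Omega>"
  shows "f z \<le> Sup (f ` \<Omega>)"
proof -
  have "bounded (f ` closure \<Omega>)"
    using compact_continuous_image[OF assms(2)] assms(1) compact_closure compact_imp_bounded by blast
  then have "bdd_above (f ` \<Omega>)"
    using closure_subset by (meson bounded_imp_bdd_above bdd_above_mono image_mono)
  then show ?thesis using assms(3) by (simp add: cSup_upper)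
qed

lemma Lp_norm_Rq_density_le:
  fixes \<phi> :: "'n::finite cvec \<Rightarrow> real"
  assumes \<Omega>: "bounded \<Omega>" "open \<Omega>"
    and f: "continuous_on (closure \<Omega>) f" "\<And>z. z \<in> \<Omega> \<Longrightarrow> 0 < f z"
    and \<phi>: "continuous_on (closure \<Omega>) \<phi>" "\<And>z. z \<in> \<Omega> \<Longrightarrow> \<phi> z \<le> 0"
  shows "(LINT z:\<Omega>|lborel. \<bar>Rq \<Omega> f \<phi> * (- \<phi> z) ^ CARD('n) * f z\<bar> powr (1 + 1 / real CARD('n)))
           powr (1 / (1 + 1 / real CARD('n)))
         \<le> Sup (f ` \<Omega>) powr (1 / real (Suc CARD('n)))
           * (Rq \<Omega> f \<phi> * weighted_norm (Suc CARD('n)) \<Omega> f \<phi> ^ CARD('n))"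
  unfolding mult.assoc[symmetric]
proof (rule Lp_norm_density_le)
  show "1 \<le> CARD('n)" by (simp add: Suc_le_eq)
  show "0 \<le> Rq \<Omega> f \<phi>" by (rule Rq_nonneg[OF \<Omega>(2)]) (use \<phi>(2) f(2) less_imp_le in auto)
  show "set_integrable lborel \<Omega> (\<lambda>z. \<bar>\<phi> z\<bar> ^ Suc CARD('n) * f z)"
    by (intro set_integrable_continuous_on_closure[OF \<Omega>] continuous_intros \<phi>(1) f(1))
qed (use \<phi>(2) f(2) le_Sup_image_if_continuous_on_closure[OF \<Omega>(1) f(1)] in auto)

theorem mainTheorem5:
  fixes \<Omega> :: "(complex ^ 'n) set"
    and f :: "complex ^ 'n \<Rightarrow> real"
    and u :: "nat \<Rightarrow> complex ^ 'n \<Rightarrow> real"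
  assumes dom: "strictly_pseudoconvex \<Omega>"
    and f_smooth: "smooth_on_closure \<Omega> f"
    and f_pos: "\<forall>z\<in>closure \<Omega>. 0 < f z"
    and u0_psh: "psh_on \<Omega> (u 0)"
    and u0_lip: "\<exists>C. C-lipschitz_on (closure \<Omega>) (u 0)"
    and u0_MA: "\<forall>A\<in>sets borel. A \<subseteq> \<Omega> \<longrightarrow>
                  (\<integral>\<^sup>+ z\<in>A. ennreal (f z) \<partial>lborel) \<le> emeasure (MA \<Omega> (u 0)) A"
    and u0_bdry: "\<forall>z\<in>frontier \<Omega>. u 0 z \<le> 0"
    and u0_mass: "emeasure (MA \<Omega> (u 0)) \<Omega> < \<infinity>"
    and uk_psh: "\<forall>k. psh_on \<Omega> (u (Suc k)) \<and> continuous_on (closure \<Omega>) (u (Suc k))"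
    and uk_MA: "\<forall>k. is_MA \<Omega> (u (Suc k))
                  (density lborel (\<lambda>z. ennreal (indicator \<Omega> z *
                     (Rq \<Omega> f (u k) * (- u k z) ^ CARD('n) * f z))))"
    and uk_bdry: "\<forall>k. \<forall>z\<in>frontier \<Omega>. u (Suc k) z = 0"
  shows "\<forall>k. (LINT z:\<Omega>|lborel. \<bar>Rq \<Omega> f (u k) * (- u k z) ^ CARD('n) * f z\<bar>
                               powr (1 + 1 / real CARD('n)))
               powr (1 / (1 + 1 / real CARD('n)))
           \<le> (Sup (f ` \<Omega>)) powr (1 / (real CARD('n) + 1)) * Rq \<Omega> f (u 0) *
              ((LINT z:\<Omega>|lborel. \<bar>u 0 z\<bar> ^ (CARD('n) + 1) * f z)
                 powr (1 / (real CARD('n) + 1))) ^ CARD('n)"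
proof
  fix k
  let ?a = "\<lambda>k. Rq \<Omega> f (u k) * weighted_norm (Suc CARD('n)) \<Omega> f (u k) ^ CARD('n)"
  have \<Omega>: "bounded \<Omega>" "open \<Omega>" using dom unfolding strictly_pseudoconvex_def by blast+
  have f: "continuous_on (closure \<Omega>) f" "\<And>z. z \<in> \<Omega> \<Longrightarrow> 0 < f z"
    using continuous_on_closure_if_smooth_on_closure[OF f_smooth] f_pos closure_subset by auto
  have u_psh: "psh_on \<Omega> (u j)" for j using u0_psh uk_psh by (cases j) auto
  have u_cont: "continuous_on (closure \<Omega>) (u j)" for j
    using u0_lip lipschitz_on_continuous_on uk_psh by (cases j) auto
  have u_nonpos: "u j z \<le> 0" if "z \<in> \<Omega>" for j z
    using u0_bdry uk_bdry
    by (intro psh_on_nonpos_if_frontier_nonpos[OF u_psh u_cont \<Omega>(1) _ that]) (cases j; simp)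
  have "?a (Suc j) \<le> ?a j" for j
    by (rule Rq_weighted_norm_step[OF \<Omega>(2,1) f u_cont u_nonpos u_cont u_nonpos
          MA_eqI[OF u_psh u_cont \<Omega>(1) uk_MA[rule_format, of j]]])
  then have "decseq ?a" by (rule decseq_SucI)
  then have "?a k \<le> ?a 0" by (rule decseqD) simp
  then have "Sup (f ` \<Omega>) powr (1 / real (Suc CARD('n))) * ?a k
      \<le> Sup (f ` \<Omega>) powr (1 / real (Suc CARD('n))) * ?a 0"
    by (intro mult_left_mono) auto
  from order_trans[OF Lp_norm_Rq_density_le[OF \<Omega> f u_cont u_nonpos] this]
  show "(LINT z:\<Omega>|lborel. \<bar>Rq \<Omega> f (u k) * (- u k z) ^ CARD('n) * f z\<bar>
      powr (1 + 1 / real CARD('n))) powr (1 / (1 + 1 / real CARD('n)))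
      \<le> (Sup (f ` \<Omega>)) powr (1 / (real CARD('n) + 1)) * Rq \<Omega> f (u 0) *
        ((LINT z:\<Omega>|lborel. \<bar>u 0 z\<bar> ^ (CARD('n) + 1) * f z) powr (1 / (real CARD('n) + 1))) ^ CARD('n)"
    by (simp add: weighted_norm_def mult.assoc add.commute)
qed


end
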